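(* Let $(A,I)\in\mathcal{C}$ and let $N$ be an integer not appearing in $A$. Let $a$ be the word obtained from $A$ by removing all letters larger than $N$. Suppose $\Psi^{-1}(A,I)=(P,Q)$ and $\Psi^{-1}(a,i)=(p,q)$ for some word $i$ with $(a,i)\in\mathcal{C}$. Then removing all entries larger than $N$ from $P$ yields $p$.
   Context: Tableaux are in English convention; $T(r,c)$ is the entry at row $r$, column $c$. An increasing tableau has positive integer entries strictly increasing along rows and columns. A reverse set-valued tableau (RSVT) is a filling of a Young diagram with nonempty finite subsets of $\mathbb{Z}_{>0}$ with $\min Q(r,c)\ge\max Q(r,c+1)$ and $\min Q(r,c)>\max Q(r+1,c)$. $\mathcal{T}$ is the set of pairs $(P,Q)$, $P$ increasing, $Q$ an RSVT of the same shape. A compatible pair $(a,i)$ consists of two words of the same length with $i$ weakly increasing and $i_j=i_{j+1}\Rightarrow a_j>a_{j+1}$; $\mathcal{C}$ is the set of compatible pairs. Reverse row insertion. $P_{r\downarrow}$ is $P$ with its first $r-1$ rows deleted. A value $x$ is ejectable in $P$ if $x$ is in the first row and either $x+1$ is not in the first row, or $x+1$ is in the first row and ejectable in $P_{2\downarrow}$. A cell $(r,c)$ is outer if neither $(r+1,c)$ nor $(r,c+1)$ is a cell. The bumping path of $(r,c)$ is $(r,c_r),\dots,(1,c_1)$ with $c_r=c$ and $c_i$ the largest index with $P(i,c_i)<P(i+1,c_{i+1})$; $m_i=P(i,c_i)$. Input $P$, outer cell $(r,c)$, $\alpha\in\{0,1\}$; output $(P',m)$, $m=m_1$. Start with $P'=P$;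 if $\alpha=1$ delete cell $(r,c)$ from $P'$, $\alpha_r=1$, $i=r-1$; if $\alpha=0$, $m_{r+1}=\infty$, $\alpha_{r+1}=0$, $i=r$. While $i\ge1$, with $R$ the entries of row $i$ of $P$: (D) if $m_i+1\in R$ leave row $i$, $\alpha_i=\alpha_{i+1}$; (DR) else if $\alpha_{i+1}=1$ and $m_{i+1}\notin R$ replace $m_i$ by $m_{i+1}$ in row $i$ of $P'$, $\alpha_i=1$; otherwise let $x$ be the largest value ejectable in the current $P'_{(i+1)\downarrow}$ with $m_i<x<m_{i+1}$: (IR) if it exists replace $m_i$ by $x$ in row $i$ of $P'$, $\alpha_i=1$; (NR) otherwise leave row $i$, $\alpha_i=0$. Decrease $i$; at $i=0$ output $P'$. The map $\Psi:\mathcal{T}\to\mathcal{C}$: the pair of empty tableaux maps to the pair of empty words. Otherwise let $q$ be the minimum entry of $Q$ and $(r,c)$ the rightmost cell with $q\in Q(r,c)$; if $Q(r,c)=\{q\}$ delete that cell to get $Q'$ and reverse-insert $(P,(r,c),1)$, otherwise remove $q$ from $Q(r,c)$ to get $Q'$ and reverse-insert $(P,(r,c),0)$, obtaining $(P',m)$; then $\Psi(P,Q)=(m\,a',\,q\,i')$ where $(a',i')=\Psi(P',Q')$. It is known that $\Psi$ is a bijection from $\mathcal{T}$ to $\mathcal{C}$. *)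

theory Defs
  imports Main "HOL-Library.Extended_Nat"
begin

(* Cells are (row, column), 1-indexed, English convention.
   A tableau is a finite partial map from cells to entries; its domain is its shape. *)
type_synonym tab = "(nat \<times> nat) \<Rightarrow> nat option"
type_synonym stab = "(nat \<times> nat) \<Rightarrow> nat set option"

definition young_diagram :: "(nat \<times> nat) set \<Rightarrow> bool" where
  "young_diagram D \<longleftrightarrow> finite D \<and> (\<forall>(r,c)\<in>D. r \<ge> 1 \<and> c \<ge> 1) \<and>
     (\<forall>r c r' c'. (r,c) \<in> D \<longrightarrow> 1 \<le> r' \<longrightarrow> r' \<le> r \<longrightarrow> 1 \<le> c' \<longrightarrow> c' \<le> c \<longrightarrow> (r',c') \<in> D)"

definition increasing_tableau :: "tab \<Rightarrow> bool" where
  "increasing_tableau P \<longleftrightarrow> young_diagram (dom P) \<and> (\<forall>v\<in>ran P. v > 0) \<and>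
     (\<forall>r c u v. P (r,c) = Some u \<longrightarrow> P (r, c+1) = Some v \<longrightarrow> u < v) \<and>
     (\<forall>r c u v. P (r,c) = Some u \<longrightarrow> P (r+1, c) = Some v \<longrightarrow> u < v)"

definition rsvt :: "stab \<Rightarrow> bool" where
  "rsvt Q \<longleftrightarrow> young_diagram (dom Q) \<and>
     (\<forall>S\<in>ran Q. S \<noteq> {} \<and> finite S \<and> (\<forall>x\<in>S. x > 0)) \<and>
     (\<forall>r c S U. Q (r,c) = Some S \<longrightarrow> Q (r, c+1) = Some U \<longrightarrow> Min S \<ge> Max U) \<and>
     (\<forall>r c S U. Q (r,c) = Some S \<longrightarrow> Q (r+1, c) = Some U \<longrightarrow> Min S > Max U)"

definition calT :: "(tab \<times> stab) set" where
  "calT = {(P,Q). increasing_tableau P \<and> rsvt Q \<and> dom P = dom Q}"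

definition calC :: "(nat list \<times> nat list) set" where
  "calC = {(a,i). length a = length i \<and> (\<forall>x\<in>set a. x > 0) \<and> (\<forall>x\<in>set i. x > 0) \<and>
     sorted i \<and> (\<forall>j. Suc j < length i \<longrightarrow> i ! j = i ! Suc j \<longrightarrow> a ! j > a ! Suc j)}"

definition row :: "tab \<Rightarrow> nat \<Rightarrow> nat set" where
  "row P k = {v. \<exists>c. P (k,c) = Some v}"

(* ejectable P k x : x is ejectable in P_{k\<down>} (rows k, k+1, ... of P) *)
inductive ejectable :: "tab \<Rightarrow> nat \<Rightarrow> nat \<Rightarrow> bool" where
  ej_stop: "x \<in> row P k \<Longrightarrow> x + 1 \<notin> row P k \<Longrightarrow> ejectable P k x"
| ej_step: "x \<in> row P k \<Longrightarrow> x + 1 \<in> row P k \<Longrightarrow> ejectable P (k+1) (x+1) \<Longrightarrow> ejectable P k x"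

(* bumping path of the cell (r,c): bcol_d P r c d is the column c_{r-d} *)
fun bcol_d :: "tab \<Rightarrow> nat \<Rightarrow> nat \<Rightarrow> nat \<Rightarrow> nat" where
  "bcol_d P r c 0 = c"
| "bcol_d P r c (Suc d) = (GREATEST c'. \<exists>v w. P (r - Suc d, c') = Some v \<and>
        P (r - d, bcol_d P r c d) = Some w \<and> v < w)"

definition bcol :: "tab \<Rightarrow> nat \<Rightarrow> nat \<Rightarrow> nat \<Rightarrow> nat" where
  "bcol P r c i = bcol_d P r c (r - i)"

(* main loop of reverse row insertion, processing rows i = Suc j, j, ..., 1.
   Arguments: original P, the cell (r,c), i, current P', alpha_{i+1}, m_{i+1} (\<infinity> allowed). *)
fun rloop :: "tab \<Rightarrow> nat \<Rightarrow> nat \<Rightarrow> nat \<Rightarrow> tab \<Rightarrow> bool \<Rightarrow> enat \<Rightarrow> tab" where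
  "rloop P r c 0 P' al ub = P'"
| "rloop P r c (Suc j) P' al ub =
     (let i = Suc j; ci = bcol P r c i; mi = the (P (i, ci)); R = row P i;
          X = {x. ejectable P' (i+1) x \<and> mi < x \<and> enat x < ub} in
      if mi + 1 \<in> R then rloop P r c j P' al (enat mi)
      else if al \<and> ub \<noteq> \<infinity> \<and> the_enat ub \<notin> R
        then rloop P r c j (P'((i, ci) := Some (the_enat ub))) True (enat mi)
      else if X \<noteq> {} then rloop P r c j (P'((i, ci) := Some (Max X))) True (enat mi)
      else rloop P r c j P' False (enat mi))"

definition rev_insert :: "tab \<Rightarrow> nat \<times> nat \<Rightarrow> bool \<Rightarrow> tab \<times> nat" where
  "rev_insert P rc al = (case rc of (r,c) \<Rightarrow>
     (if al then rloop P r c (r - 1) (P((r,c) := None)) True (enat (the (P (r,c))))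
      else rloop P r c r P False \<infinity>,
      the (P (1, bcol P r c 1))))"

definition psi_step :: "tab \<Rightarrow> stab \<Rightarrow> tab \<times> stab \<times> nat \<times> nat" where
  "psi_step P Q =
    (let q = Min (\<Union> (ran Q));
         c = (GREATEST c. \<exists>r S. Q (r,c) = Some S \<and> q \<in> S);
         r = (THE r. \<exists>S. Q (r,c) = Some S \<and> q \<in> S);
         S = the (Q (r,c))
     in if S = {q}
        then (fst (rev_insert P (r,c) True), Q((r,c) := None), snd (rev_insert P (r,c) True), q)
        else (fst (rev_insert P (r,c) False), Q((r,c) := Some (S - {q})),
              snd (rev_insert P (r,c) False), q))"

inductive Psi_graph :: "tab \<Rightarrow> stab \<Rightarrow> nat list \<Rightarrow> nat list \<Rightarrow> bool" where
  psi_empty: "Psi_graph Map.empty Map.empty [] []"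
| psi_step: "Q \<noteq> Map.empty \<Longrightarrow> psi_step P Q = (P', Q', m, q) \<Longrightarrow> Psi_graph P' Q' a' i' \<Longrightarrow>
      Psi_graph P Q (m # a') (q # i')"

definition restrict_le :: "int \<Rightarrow> tab \<Rightarrow> tab" where
  "restrict_le N P = (\<lambda>x. case P x of None \<Rightarrow> None | Some v \<Rightarrow> if int v \<le> N then Some v else None)"

end

(* The tableau P of Psi^-1(A, I) depends on the word A alone. One step of Psi, reverse row
   insertion along a bumping path, is undone by forward insertion of its output letter m into the
   smaller tableau F, and that forward insertion is determined by F and m; so P is obtained from
   the empty tableau by inserting the letters of A, last one first.
   Deleting the entries > N commutes with each insertion. The values along a bumping path
   increase, so for m > N the whole path carries values > N and F, P agree up to such entries.
   For m < N the restricted insertion follows the same path and stops at the last row whose path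
   value is below N. This uses that N is not a letter: no entry equals N, so no path value does,
   and a run of consecutive values witnessing ejectability never reaches past N. Hence deleting the
   entries > N from P gives the tableau of the filtered word a, which is p. Neither the recording
   tableaux Q, q nor the compatibility of (A, I) and (a, i) enter the argument. *)

theory Submission
  imports Defs
begin

section \<open>Tableaux, rows and restriction\<close>

lemma ejectable_in_row: "ejectable P k x \<Longrightarrow> x \<in> row P k"
  by (induction rule: ejectable.induct) auto

lemma row_cong: "(\<And>c. P1 (i, c) = P2 (i, c)) \<Longrightarrow> row P1 i = row P2 i"
  unfolding row_def by simp

lemma row_subset_ran: "row P k \<subseteq> ran P"
  unfolding row_def ran_def by auto

lemma finite_row: "finite (dom P) \<Longrightarrow> finite (row P k)"
  using finite_ran finite_subset row_subset_ran by metis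

lemma ejectable_cong:
  assumes "ejectable P1 k x" "\<And>i c. k \<le> i \<Longrightarrow> P1 (i, c) = P2 (i, c)"
  shows "ejectable P2 k x"
  using assms
proof (induction rule: ejectable.induct)
  case (ej_stop x P k)
  then show ?case using row_cong[of P k P2] ejectable.ej_stop by simp
next
  case (ej_step x P k)
  then show ?case using row_cong[of P k P2] ejectable.ej_step by simp
qed

lemma ejectable_cong_iff:
  "(\<And>i c. k \<le> i \<Longrightarrow> P1 (i, c) = P2 (i, c)) \<Longrightarrow> ejectable P1 k x \<longleftrightarrow> ejectable P2 k x"
  using ejectable_cong[of P1 k x P2] ejectable_cong[of P2 k x P1] by metis

lemma ejectable_succ_iff:
  "x \<in> row P k \<Longrightarrow> x + 1 \<in> row P k \<Longrightarrow> ejectable P k x \<longleftrightarrow> ejectable P (Suc k) (x + 1)"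
  by (auto elim: ejectable.cases intro: ejectable.ej_step)

lemma restrict_le_Some: "restrict_le N P x = Some v \<longleftrightarrow> P x = Some v \<and> int v \<le> N"
  unfolding restrict_le_def by (cases "P x") auto

lemma restrict_le_None: "restrict_le N P x = None \<longleftrightarrow> (\<forall>v. P x = Some v \<longrightarrow> N < int v)"
  unfolding restrict_le_def by (cases "P x") auto

lemma restrict_le_cong: "P x = Q x \<Longrightarrow> restrict_le N P x = restrict_le N Q x"
  unfolding restrict_le_def by simp

lemma restrict_le_empty [simp]: "restrict_le N Map.empty = Map.empty"
  unfolding restrict_le_def by (rule ext) simp

lemma row_restrict_le: "x \<in> row (restrict_le N P) k \<longleftrightarrow> x \<in> row P k \<and> int x \<le> N"
  unfolding row_def by (auto simp: restrict_le_Some)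

lemma ran_avoids: "N \<notin> int ` ran P \<Longrightarrow> P x = Some v \<Longrightarrow> int v \<noteq> N"
  unfolding ran_def by force

lemma row_avoids: "N \<notin> int ` ran P \<Longrightarrow> x \<in> row P k \<Longrightarrow> int x \<noteq> N"
  using row_subset_ran by blast

text \<open>Since \<open>N\<close> is not an entry, the chain of consecutive values \<open>x, x + 1, \<dots>\<close> witnessing
  ejectability cannot cross \<open>N\<close>.\<close>

lemma ejectable_restrict_le_imp:
  assumes "ejectable (restrict_le N P) k x" "N \<notin> int ` ran P"
  shows "ejectable P k x"
  using assms
proof (induction "restrict_le N P" k x rule: ejectable.induct)
  case (ej_stop x k)
  have "x \<in> row P k" "int x \<le> N" using ej_stop(1) row_restrict_le by blast+
  moreover have "int x \<noteq> N" using row_avoids[OF ej_stop(3)] \<open>x \<in> row P k\<close> .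
  ultimately have "x + 1 \<notin> row P k"
    using ej_stop(2) row_restrict_le by fastforce
  then show ?case using ej_stop row_restrict_le ejectable.ej_stop by blast
next
  case (ej_step x k)
  then show ?case using row_restrict_le ejectable.ej_step by blast
qed

lemma ejectable_restrict_le_less:
  assumes "ejectable (restrict_le N P) k x" "N \<notin> int ` ran P"
  shows "int x < N"
proof -
  have "x \<in> row P k" "int x \<le> N" using ejectable_in_row[OF assms(1)] row_restrict_le by blast+
  then show ?thesis using row_avoids[OF assms(2)] by fastforce
qed

lemma ejectable_imp_restrict_le:
  assumes "ejectable P k x" "int x < N" "N \<notin> int ` ran P"
  shows "ejectable (restrict_le N P) k x"
  using assms
proof (induction P k x rule: ejectable.induct)
  case (ej_stop x P k)
  then show ?case using row_restrict_le ejectable.ej_stop by (metis less_le)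
next
  case (ej_step x P k)
  have "int (x + 1) < N" using ej_step(2,5) row_avoids[OF ej_step(6)] by fastforce
  then show ?case using ej_step row_restrict_le ejectable.ej_step by auto
qed

lemma ejectable_restrict_le_iff:
  "int x < N \<Longrightarrow> N \<notin> int ` ran P \<Longrightarrow> ejectable (restrict_le N P) k x \<longleftrightarrow> ejectable P k x"
  using ejectable_restrict_le_imp ejectable_imp_restrict_le by blast


section \<open>Bumping paths\<close>

text \<open>\<open>bump_path P F m r al mm cc\<close> says that reverse row insertion applied to \<open>P\<close> can output
  \<open>(F, m)\<close> along the path \<open>(i, cc i)\<close>, \<open>1 \<le> i \<le> r\<close>, whose entries in \<open>P\<close> are \<open>mm i\<close>; \<open>al\<close> tells
  whether the last cell was deleted. Every clause is read as an instruction for forward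
  insertion of \<open>m\<close> into \<open>F\<close>: row \<open>i\<close> of \<open>P\<close> arises from row \<open>i\<close> of \<open>F\<close> by writing \<open>mm i\<close> into the
  first cell whose entry is not below \<open>mm i\<close>, and \<open>bump_step\<close> computes the value \<open>mm (Suc i)\<close>
  passed on to the next row. Hence \<open>P\<close> is determined by \<open>F\<close> and \<open>m\<close>.\<close>

definition next_bump :: "tab \<Rightarrow> tab \<Rightarrow> nat \<Rightarrow> nat \<Rightarrow> nat \<Rightarrow> nat \<Rightarrow> bool" where
  "next_bump P F i ci y m' \<longleftrightarrow> y < m' \<and> (P (i, Suc ci) = Some m' \<or> ejectable F (Suc i) m') \<and>
     (\<forall>z. y < z \<longrightarrow> z < m' \<longrightarrow> \<not> ejectable F (Suc i) z) \<and> (\<forall>w. P (i, Suc ci) = Some w \<longrightarrow> m' \<le> w)"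

definition bump_step :: "tab \<Rightarrow> tab \<Rightarrow> nat \<Rightarrow> nat \<Rightarrow> nat \<Rightarrow> nat \<Rightarrow> bool" where
  "bump_step P F i ci mi m' \<longleftrightarrow> (\<exists>y. F (i, ci) = Some y \<and> mi \<le> y \<and>
     (if mi + 1 \<in> row P i then m' = mi + 1 \<and> y = mi
      else if mi < y \<and> \<not> ejectable F (Suc i) y then m' = y \<and> m' \<notin> row P i
      else next_bump P F i ci y m'))"

definition bump_end :: "tab \<Rightarrow> tab \<Rightarrow> nat \<Rightarrow> nat \<Rightarrow> nat \<Rightarrow> bool \<Rightarrow> bool" where
  "bump_end P F r cr mr al \<longleftrightarrow> (if al then F (r, cr) = None else
     (\<exists>y. F (r, cr) = Some y \<and> mr \<le> y \<and> (y = mr \<or> ejectable F (Suc r) y) \<and>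
        (\<forall>z. y < z \<longrightarrow> \<not> ejectable F (Suc r) z) \<and> mr + 1 \<notin> row P r \<and> P (r, Suc cr) = None))"

definition bump_path :: "tab \<Rightarrow> tab \<Rightarrow> nat \<Rightarrow> nat \<Rightarrow> bool \<Rightarrow> (nat \<Rightarrow> nat) \<Rightarrow> (nat \<Rightarrow> nat) \<Rightarrow> bool" where
  "bump_path P F m r al mm cc \<longleftrightarrow> 1 \<le> r \<and> m = mm 1 \<and>
     (\<forall>c. P (0, c) = F (0, c)) \<and>
     (\<forall>i c. r < i \<longrightarrow> P (i, c) = F (i, c)) \<and>
     (\<forall>i. 1 \<le> i \<longrightarrow> i \<le> r \<longrightarrow> 1 \<le> cc i \<and> P (i, cc i) = Some (mm i) \<and>
         (\<forall>c. c \<noteq> cc i \<longrightarrow> P (i, c) = F (i, c)) \<and>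
         (\<forall>c. 1 \<le> c \<longrightarrow> c < cc i \<longrightarrow> (\<exists>v. F (i, c) = Some v \<and> v < mm i)) \<and>
         (\<forall>v. F (i, cc i) = Some v \<longrightarrow> mm i \<le> v)) \<and>
     (\<forall>i. 1 \<le> i \<longrightarrow> i < r \<longrightarrow> mm i < mm (Suc i) \<and> bump_step P F i (cc i) (mm i) (mm (Suc i))) \<and>
     bump_end P F r (cc r) (mm r) al"

lemma bump_pathI:
  assumes "1 \<le> r" "m = mm 1" "\<And>c. P (0, c) = F (0, c)" "\<And>i c. r < i \<Longrightarrow> P (i, c) = F (i, c)"
    and "\<And>i. 1 \<le> i \<Longrightarrow> i \<le> r \<Longrightarrow> 1 \<le> cc i"
    and "\<And>i. 1 \<le> i \<Longrightarrow> i \<le> r \<Longrightarrow> P (i, cc i) = Some (mm i)"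
    and "\<And>i c. 1 \<le> i \<Longrightarrow> i \<le> r \<Longrightarrow> c \<noteq> cc i \<Longrightarrow> P (i, c) = F (i, c)"
    and "\<And>i c. 1 \<le> i \<Longrightarrow> i \<le> r \<Longrightarrow> 1 \<le> c \<Longrightarrow> c < cc i \<Longrightarrow> \<exists>v. F (i, c) = Some v \<and> v < mm i"
    and "\<And>i v. 1 \<le> i \<Longrightarrow> i \<le> r \<Longrightarrow> F (i, cc i) = Some v \<Longrightarrow> mm i \<le> v"
    and "\<And>i. 1 \<le> i \<Longrightarrow> i < r \<Longrightarrow> mm i < mm (Suc i)"
    and "\<And>i. 1 \<le> i \<Longrightarrow> i < r \<Longrightarrow> bump_step P F i (cc i) (mm i) (mm (Suc i))"
    and "bump_end P F r (cc r) (mm r) al"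
  shows "bump_path P F m r al mm cc"
  using assms unfolding bump_path_def by blast

context
  fixes P F m r al mm cc
  assumes path: "bump_path P F m r al mm cc"
begin

lemma bump_path_height: "1 \<le> r"
  and bump_path_start: "m = mm 1"
  and bump_path_row0: "P (0, c) = F (0, c)"
  and bump_path_below: "r < i \<Longrightarrow> P (i, c) = F (i, c)"
  and bump_path_col_pos: "1 \<le> i \<Longrightarrow> i \<le> r \<Longrightarrow> 1 \<le> cc i"
  and bump_path_entry: "1 \<le> i \<Longrightarrow> i \<le> r \<Longrightarrow> P (i, cc i) = Some (mm i)"
  and bump_path_off: "1 \<le> i \<Longrightarrow> i \<le> r \<Longrightarrow> c \<noteq> cc i \<Longrightarrow> P (i, c) = F (i, c)"
  and bump_path_left:
    "1 \<le> i \<Longrightarrow> i \<le> r \<Longrightarrow> 1 \<le> c \<Longrightarrow> c < cc i \<Longrightarrow> \<exists>v. F (i, c) = Some v \<and> v < mm i"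
  and bump_path_at: "1 \<le> i \<Longrightarrow> i \<le> r \<Longrightarrow> F (i, cc i) = Some v \<Longrightarrow> mm i \<le> v"
  and bump_path_less: "1 \<le> i \<Longrightarrow> i < r \<Longrightarrow> mm i < mm (Suc i)"
  and bump_path_step: "1 \<le> i \<Longrightarrow> i < r \<Longrightarrow> bump_step P F i (cc i) (mm i) (mm (Suc i))"
  and bump_path_end: "bump_end P F r (cc r) (mm r) al"
  using path unfolding bump_path_def by blast+

lemma bump_path_off_path: "\<not> (1 \<le> i \<and> i \<le> r \<and> c = cc i) \<Longrightarrow> P (i, c) = F (i, c)"
  using bump_path_row0 bump_path_below bump_path_off by (metis linorder_not_le less_one)

lemma bump_path_mono:
  assumes "1 \<le> i" "i \<le> j" "j \<le> r"
  shows "mm i \<le> mm j"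
  using assms(2,3)
proof (induction j rule: dec_induct)
  case (step n)
  then show ?case using bump_path_less[of n] assms(1) by simp
qed simp

end

lemma next_bump_unique: "next_bump P F i ci y a \<Longrightarrow> next_bump P F i ci y b \<Longrightarrow> a = b"
  unfolding next_bump_def by (metis linorder_neqE_nat not_le option.inject)

lemma bump_step_unique: "bump_step P F i ci mi a \<Longrightarrow> bump_step P F i ci mi b \<Longrightarrow> a = b"
  unfolding bump_step_def using next_bump_unique by (smt (verit) option.inject)

lemma bump_step_cong_row:
  assumes "\<And>c. P1 (i, c) = P2 (i, c)"
  shows "bump_step P1 F i ci mi m' = bump_step P2 F i ci mi m'"
proof -
  have "row P1 i = row P2 i" "P1 (i, Suc ci) = P2 (i, Suc ci)" using assms row_cong by blast+
  then show ?thesis by (simp only: bump_step_def next_bump_def)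
qed

lemma bump_end_not_step: "bump_end P F r cr mr al \<Longrightarrow> \<not> bump_step P F r cr mr m'"
  unfolding bump_end_def bump_step_def next_bump_def by (cases al) auto

lemma insertion_column_unique:
  fixes F :: tab
  assumes "\<forall>c. 1 \<le> c \<longrightarrow> c < c1 \<longrightarrow> (\<exists>v. F (i, c) = Some v \<and> v < m)"
    and "\<forall>v. F (i, c1) = Some v \<longrightarrow> m \<le> v"
    and "\<forall>c. 1 \<le> c \<longrightarrow> c < c2 \<longrightarrow> (\<exists>v. F (i, c) = Some v \<and> v < m)"
    and "\<forall>v. F (i, c2) = Some v \<longrightarrow> m \<le> v"
    and "1 \<le> c1" "1 \<le> c2"
  shows "c1 = c2"
proof (rule ccontr)
  assume "c1 \<noteq> c2"
  then consider "c1 < c2" | "c2 < c1" by linarith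
  then show False
    by cases (use assms in \<open>fastforce+\<close>)
qed

lemma bump_path_column_eq:
  assumes p1: "bump_path P1 F m r1 al1 mm1 cc1" and p2: "bump_path P2 F m r2 al2 mm2 cc2"
    and i: "1 \<le> i" "i \<le> r1" "i \<le> r2" and mm: "mm1 i = mm2 i"
  shows "cc1 i = cc2 i"
proof (rule insertion_column_unique)
  show "\<forall>c. 1 \<le> c \<longrightarrow> c < cc1 i \<longrightarrow> (\<exists>v. F (i, c) = Some v \<and> v < mm1 i)"
    "\<forall>v. F (i, cc1 i) = Some v \<longrightarrow> mm1 i \<le> v" "1 \<le> cc1 i"
    using bump_path_left[OF p1] bump_path_at[OF p1] bump_path_col_pos[OF p1] i by auto
  show "\<forall>c. 1 \<le> c \<longrightarrow> c < cc2 i \<longrightarrow> (\<exists>v. F (i, c) = Some v \<and> v < mm1 i)"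
    "\<forall>v. F (i, cc2 i) = Some v \<longrightarrow> mm1 i \<le> v" "1 \<le> cc2 i"
    using bump_path_left[OF p2] bump_path_at[OF p2] bump_path_col_pos[OF p2] i mm by auto
qed

lemma bump_path_row_eq:
  assumes p1: "bump_path P1 F m r1 al1 mm1 cc1" and p2: "bump_path P2 F m r2 al2 mm2 cc2"
    and i: "1 \<le> i" "i \<le> r1" "i \<le> r2" and eq: "mm1 i = mm2 i" "cc1 i = cc2 i"
  shows "P1 (i, c) = P2 (i, c)"
proof (cases "c = cc1 i")
  case True
  then show ?thesis using bump_path_entry[OF p1 i(1,2)] bump_path_entry[OF p2 i(1,3)] eq by simp
next
  case False
  then show ?thesis using bump_path_off[OF p1] bump_path_off[OF p2] i eq by simp
qed

lemma bump_path_agree: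
  assumes p1: "bump_path P1 F m r1 al1 mm1 cc1" and p2: "bump_path P2 F m r2 al2 mm2 cc2"
    and i: "1 \<le> i" "i \<le> r1" "i \<le> r2"
  shows "mm1 i = mm2 i \<and> cc1 i = cc2 i \<and> (\<forall>c. P1 (i, c) = P2 (i, c))"
  using i
proof (induction i rule: dec_induct)
  case base
  have mm: "mm1 1 = mm2 1" using bump_path_start[OF p1] bump_path_start[OF p2] by simp
  with base have "cc1 1 = cc2 1" using bump_path_column_eq[OF p1 p2] by blast
  with mm base show ?case using bump_path_row_eq[OF p1 p2] by blast
next
  case (step k)
  then have k: "1 \<le> k" "k < r1" "k < r2" and IH: "mm1 k = mm2 k" "cc1 k = cc2 k" "\<And>c. P1 (k, c) = P2 (k, c)"
    by auto
  have "bump_step P1 F k (cc1 k) (mm1 k) (mm2 (Suc k))"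
    using bump_path_step[OF p2 k(1,3)] IH bump_step_cong_row[of P1 k P2] by simp
  then have mm: "mm1 (Suc k) = mm2 (Suc k)" using bump_step_unique bump_path_step[OF p1 k(1,2)] by blast
  with step have "cc1 (Suc k) = cc2 (Suc k)" using bump_path_column_eq[OF p1 p2] by simp
  with mm step show ?case using bump_path_row_eq[OF p1 p2] by simp
qed

lemma bump_path_height_unique:
  assumes p1: "bump_path P1 F m r1 al1 mm1 cc1" and p2: "bump_path P2 F m r2 al2 mm2 cc2"
  shows "r1 = r2"
proof -
  have "\<not> r1 < r2" if p1: "bump_path P1 F m r1 al1 mm1 cc1" and p2: "bump_path P2 F m r2 al2 mm2 cc2"
    for P1 r1 al1 mm1 cc1 P2 r2 al2 mm2 cc2
  proof
    assume lt: "r1 < r2"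
    have r1: "1 \<le> r1" using bump_path_height[OF p1] .
    then have "mm1 r1 = mm2 r1" "cc1 r1 = cc2 r1" "\<And>c. P1 (r1, c) = P2 (r1, c)"
      using bump_path_agree[OF p1 p2, of r1] lt by auto
    then have "bump_step P1 F r1 (cc1 r1) (mm1 r1) (mm2 (Suc r1))"
      using bump_path_step[OF p2 r1 lt] bump_step_cong_row[of P1 r1 P2] by simp
    then show False using bump_end_not_step bump_path_end[OF p1] by blast
  qed
  then show ?thesis using p1 p2 by (meson linorder_neqE_nat)
qed

theorem bump_path_unique:
  assumes p1: "bump_path P1 F m r1 al1 mm1 cc1" and p2: "bump_path P2 F m r2 al2 mm2 cc2"
  shows "P1 = P2"
proof (rule ext, clarify)
  fix i c
  have "r1 = r2" using bump_path_height_unique[OF p1 p2] .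
  then show "P1 (i, c) = P2 (i, c)"
    using bump_path_agree[OF p1 p2, of i] bump_path_row0[OF p1] bump_path_row0[OF p2]
      bump_path_below[OF p1] bump_path_below[OF p2]
    by (metis less_one linorder_not_le)
qed


section \<open>Bumping paths and restriction\<close>

lemma bump_step_value_in_ran:
  assumes step: "bump_step P F i ci mi m'" and Pi: "P (i, ci) = Some mi"
    and off: "\<And>c. c \<noteq> ci \<Longrightarrow> P (i, c) = F (i, c)"
  shows "m' \<in> ran F"
proof -
  obtain y where y: "F (i, ci) = Some y" and cases:
    "if mi + 1 \<in> row P i then m' = mi + 1 \<and> y = mi
     else if mi < y \<and> \<not> ejectable F (Suc i) y then m' = y \<and> m' \<notin> row P i
     else next_bump P F i ci y m'"
    using step unfolding bump_step_def by blast
  consider (D) "mi + 1 \<in> row P i" "m' = mi + 1" | (DR) "m' = y"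
    | (IR) "P (i, Suc ci) = Some m' \<or> ejectable F (Suc i) m'"
    using cases unfolding next_bump_def by (auto split: if_splits)
  then show ?thesis
  proof cases
    case D
    then obtain c where "P (i, c) = Some m'" unfolding row_def by auto
    moreover have "c \<noteq> ci" using calculation Pi D(2) by auto
    ultimately show ?thesis using off ranI by metis
  next
    case DR
    then show ?thesis using y ranI by metis
  next
    case IR
    then show ?thesis using off[of "Suc ci"] ranI ejectable_in_row row_subset_ran by (metis n_not_Suc_n subsetD)
  qed
qed

lemma bump_path_ran:
  assumes path: "bump_path P F m r al mm cc"
  shows "ran P \<subseteq> insert m (ran F)"
proof -
  have mm: "mm i \<in> insert m (ran F)" if "1 \<le> i" "i \<le> r" for i
    using that
  proof (induction i rule: dec_induct)
    case base
    then show ?case using bump_path_start[OF path] by simp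
  next
    case (step k)
    then show ?case
      using bump_step_value_in_ran[OF bump_path_step[OF path] bump_path_entry[OF path] bump_path_off[OF path]]
      by simp
  qed
  show ?thesis
  proof
    fix v assume "v \<in> ran P"
    then obtain i c where v: "P (i, c) = Some v" unfolding ran_def by auto
    show "v \<in> insert m (ran F)"
    proof (cases "1 \<le> i \<and> i \<le> r \<and> c = cc i")
      case True
      then show ?thesis using mm bump_path_entry[OF path] v by force
    next
      case False
      then show ?thesis using bump_path_off_path[OF path False] v ranI by (metis insertCI)
    qed
  qed
qed

lemma next_bump_restrict_le:
  assumes "next_bump P F i ci y m'" "int m' < N" "N \<notin> int ` ran F"
  shows "next_bump (restrict_le N P) (restrict_le N F) i ci y m'"
  unfolding next_bump_def
proof (intro conjI allI impI)
  show "y < m'" using assms(1) unfolding next_bump_def by simp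
  show "restrict_le N P (i, Suc ci) = Some m' \<or> ejectable (restrict_le N F) (Suc i) m'"
    using assms ejectable_restrict_le_iff[OF assms(2,3)] restrict_le_Some
    unfolding next_bump_def by auto
  show "\<not> ejectable (restrict_le N F) (Suc i) z" if "y < z" "z < m'" for z
    using assms that ejectable_restrict_le_imp unfolding next_bump_def by blast
  show "m' \<le> w" if "restrict_le N P (i, Suc ci) = Some w" for w
    using assms(1) that restrict_le_Some unfolding next_bump_def by blast
qed

lemma bump_step_restrict_le:
  assumes step: "bump_step P F i ci mi m'" and less: "mi < m'" "int m' < N"
    and nF: "N \<notin> int ` ran F"
  shows "bump_step (restrict_le N P) (restrict_le N F) i ci mi m'"
proof -
  obtain y where y: "F (i, ci) = Some y" "mi \<le> y" and cases:
    "if mi + 1 \<in> row P i then m' = mi + 1 \<and> y = mi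
     else if mi < y \<and> \<not> ejectable F (Suc i) y then m' = y \<and> m' \<notin> row P i
     else next_bump P F i ci y m'"
    using step unfolding bump_step_def by blast
  have "y \<le> m'"
    using cases less(1) unfolding next_bump_def by (simp split: if_split_asm)
  then have yN: "int y < N" using less by linarith
  have ry: "restrict_le N F (i, ci) = Some y" using y yN restrict_le_Some by fastforce
  have ejy: "ejectable (restrict_le N F) (Suc i) y \<longleftrightarrow> ejectable F (Suc i) y"
    using ejectable_restrict_le_iff[OF yN nF] .
  have rowm: "mi + 1 \<in> row (restrict_le N P) i \<longleftrightarrow> mi + 1 \<in> row P i"
    "m' \<in> row (restrict_le N P) i \<longleftrightarrow> m' \<in> row P i"
    using row_restrict_le less by auto
  have "if mi + 1 \<in> row (restrict_le N P) i then m' = mi + 1 \<and> y = mi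
     else if mi < y \<and> \<not> ejectable (restrict_le N F) (Suc i) y then m' = y \<and> m' \<notin> row (restrict_le N P) i
     else next_bump (restrict_le N P) (restrict_le N F) i ci y m'"
  proof -
    note nb = next_bump_restrict_le[of P F i ci y m', OF _ less(2) nF]
    show ?thesis
      unfolding rowm ejy
      by (cases "mi + 1 \<in> row P i"; cases "mi < y \<and> \<not> ejectable F (Suc i) y") (use cases nb in auto)
  qed
  then show ?thesis using ry y(2) unfolding bump_step_def by blast
qed

lemma bump_path_restrict_le_row:
  assumes path: "bump_path P F m r al mm cc" and big: "1 \<le> i \<Longrightarrow> i \<le> r \<Longrightarrow> N < int (mm i)"
  shows "restrict_le N P (i, c) = restrict_le N F (i, c)"
proof (cases "1 \<le> i \<and> i \<le> r \<and> c = cc i")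
  case True
  then have "P (i, c) = Some (mm i)" "\<forall>v. F (i, c) = Some v \<longrightarrow> mm i \<le> v" "N < int (mm i)"
    using bump_path_entry[OF path] bump_path_at[OF path] big by auto
  then have "restrict_le N P (i, c) = None" "restrict_le N F (i, c) = None"
    unfolding restrict_le_None by force+
  then show ?thesis by simp
next
  case False
  then show ?thesis using bump_path_off_path[OF path] restrict_le_cong by metis
qed

lemma bump_path_restrict_le_above:
  assumes path: "bump_path P F m r al mm cc" and mN: "N < int m"
  shows "restrict_le N P = restrict_le N F"
proof (rule ext, clarify)
  fix i c
  have "N < int (mm i)" if "1 \<le> i" "i \<le> r"
    using bump_path_mono[OF path order.refl that] bump_path_start[OF path] mN by fastforce
  then show "restrict_le N P (i, c) = restrict_le N F (i, c)" by (rule bump_path_restrict_le_row[OF path])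
qed

text \<open>Below \<open>N\<close> the path is cut at its last row \<open>k\<close> with \<open>mm k < N\<close>: there the forward insertion of the
  restricted tableaux stops, since the value it would pass on exceeds \<open>N\<close>.\<close>

lemma bump_end_restrict_le:
  assumes y: "F (k, ck) = Some y" "int y \<le> N" "mk \<le> y" and nF: "N \<notin> int ` ran F"
    and ej: "y = mk \<or> ejectable F (Suc k) y" "\<And>z. y < z \<Longrightarrow> int z < N \<Longrightarrow> \<not> ejectable F (Suc k) z"
    and row: "mk + 1 \<notin> row P k" and right: "\<And>w. P (k, Suc ck) = Some w \<Longrightarrow> N < int w"
  shows "bump_end (restrict_le N P) (restrict_le N F) k ck mk False"
proof -
  have yN: "int y < N" using y ran_avoids[OF nF] by fastforce
  have "restrict_le N F (k, ck) = Some y" using y restrict_le_Some by blast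
  moreover have "y = mk \<or> ejectable (restrict_le N F) (Suc k) y"
    using ej(1) ejectable_restrict_le_iff[OF yN nF] by blast
  moreover have "\<not> ejectable (restrict_le N F) (Suc k) z" if "y < z" for z
    using that ej(2) ejectable_restrict_le_imp[OF _ nF] ejectable_restrict_le_less[OF _ nF] by blast
  moreover have "mk + 1 \<notin> row (restrict_le N P) k" using row row_restrict_le by blast
  moreover have "restrict_le N P (k, Suc ck) = None" using right restrict_le_None by blast
  ultimately show ?thesis unfolding bump_end_def using y(3) by auto
qed

lemma bump_step_restrict_le_end:
  assumes step: "bump_step P F k ck mk m'" and mk: "int mk < N" and m': "N < int m'"
    and nF: "N \<notin> int ` ran F" and y: "restrict_le N F (k, ck) = Some y"
  shows "bump_end (restrict_le N P) (restrict_le N F) k ck mk False"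
proof -
  have Fy: "F (k, ck) = Some y" "int y \<le> N" using y restrict_le_Some by auto
  have yN: "int y < N" using Fy ran_avoids[OF nF] by fastforce
  have y_mk: "mk \<le> y" and cases:
    "if mk + 1 \<in> row P k then m' = mk + 1 \<and> y = mk
     else if mk < y \<and> \<not> ejectable F (Suc k) y then m' = y \<and> m' \<notin> row P k
     else next_bump P F k ck y m'"
    using step Fy(1) unfolding bump_step_def by auto
  have notD: "mk + 1 \<notin> row P k"
    using cases mk m' by (auto split: if_split_asm)
  moreover have "\<not> (mk < y \<and> \<not> ejectable F (Suc k) y)"
    using cases notD yN m' by (auto split: if_split_asm)
  ultimately have nb: "next_bump P F k ck y m'" and y_ej: "y = mk \<or> ejectable F (Suc k) y"
    using cases y_mk by auto
  show ?thesis
  proof (rule bump_end_restrict_le[OF Fy y_mk nF y_ej _ notD])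
    show "\<not> ejectable F (Suc k) z" if "y < z" "int z < N" for z
      using nb that m' unfolding next_bump_def by force
    show "N < int w" if "P (k, Suc ck) = Some w" for w
      using nb that m' unfolding next_bump_def by force
  qed
qed

lemma bump_end_restrict_le_end:
  assumes "bump_end P F k ck mk al" and nF: "N \<notin> int ` ran F"
  shows "bump_end (restrict_le N P) (restrict_le N F) k ck mk (restrict_le N F (k, ck) = None)"
proof (cases "restrict_le N F (k, ck)")
  case None
  then show ?thesis unfolding bump_end_def by simp
next
  case (Some y)
  then have Fy: "F (k, ck) = Some y" "int y \<le> N" using restrict_le_Some by auto
  then have "\<not> al" and y: "mk \<le> y" "y = mk \<or> ejectable F (Suc k) y"
    "\<forall>z. y < z \<longrightarrow> \<not> ejectable F (Suc k) z" "mk + 1 \<notin> row P k" "P (k, Suc ck) = None"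
    using assms(1) unfolding bump_end_def by (auto split: if_splits)
  then have "bump_end (restrict_le N P) (restrict_le N F) k ck mk False"
    using bump_end_restrict_le[OF Fy y(1) nF y(2) _ y(4)] by simp
  then show ?thesis using Some by simp
qed

lemma bump_path_restrict_le_below:
  assumes path: "bump_path P F m r al mm cc" and k: "1 \<le> k" "k \<le> r" "int (mm k) < N"
    and last: "k < r \<Longrightarrow> N < int (mm (Suc k))" and nF: "N \<notin> int ` ran F"
  shows "bump_path (restrict_le N P) (restrict_le N F) m k (restrict_le N F (k, cc k) = None) mm cc"
proof -
  have below: "int (mm i) < N" if "1 \<le> i" "i \<le> k" for i
    using bump_path_mono[OF path that] k by linarith
  have above: "N < int (mm i)" if "k < i" "i \<le> r" for i
    using bump_path_mono[OF path, of "Suc k" i] last that by fastforce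
  have end_k: "bump_end (restrict_le N P) (restrict_le N F) k (cc k) (mm k) (restrict_le N F (k, cc k) = None)"
  proof (cases "k < r")
    case True
    then show ?thesis
      using bump_step_restrict_le_end[OF bump_path_step[OF path k(1)] k(3) last nF]
      unfolding bump_end_def by (cases "restrict_le N F (k, cc k)") auto
  next
    case False
    then show ?thesis using bump_end_restrict_le_end[OF bump_path_end[OF path] nF] k(2) by simp
  qed
  have rows_below: "restrict_le N P (i, c) = restrict_le N F (i, c)" if "k < i" for i c
    using bump_path_restrict_le_row[OF path] above[OF that] by blast
  show ?thesis
  proof (rule bump_pathI)
    fix i assume i: "1 \<le> i" "i \<le> k"
    then have ir: "i \<le> r" using k by simp
    show "1 \<le> cc i" using bump_path_col_pos[OF path i(1) ir] .
    show "restrict_le N P (i, cc i) = Some (mm i)"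
      using bump_path_entry[OF path i(1) ir] below[OF i] restrict_le_Some by simp
    show "restrict_le N P (i, c) = restrict_le N F (i, c)" if "c \<noteq> cc i" for c
      using bump_path_off[OF path i(1) ir that] restrict_le_cong by metis
    show "\<exists>v. restrict_le N F (i, c) = Some v \<and> v < mm i" if "1 \<le> c" "c < cc i" for c
      using bump_path_left[OF path i(1) ir that] below[OF i] restrict_le_Some by fastforce
    show "mm i \<le> v" if "restrict_le N F (i, cc i) = Some v" for v
      using bump_path_at[OF path i(1) ir] that restrict_le_Some by blast
  next
    fix i assume i: "1 \<le> i" "i < k"
    then show "mm i < mm (Suc i)" using bump_path_less[OF path] k by simp
    show "bump_step (restrict_le N P) (restrict_le N F) i (cc i) (mm i) (mm (Suc i))"
      using bump_step_restrict_le[OF bump_path_step[OF path] bump_path_less[OF path] below nF] i k by simp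
  next
    show "restrict_le N P (0, c) = restrict_le N F (0, c)" for c
      using bump_path_row0[OF path] restrict_le_cong by metis
  qed (use k end_k rows_below bump_path_start[OF path] in auto)
qed

lemma last_below_threshold:
  fixes f :: "nat \<Rightarrow> nat"
  assumes "1 \<le> r" "int (f 1) < N"
  obtains k where "1 \<le> k" "k \<le> r" "int (f k) < N" "k < r \<Longrightarrow> N \<le> int (f (Suc k))"
proof -
  define k where "k = (GREATEST k. k \<le> r \<and> (\<forall>i. 1 \<le> i \<longrightarrow> i \<le> k \<longrightarrow> int (f i) < N))"
  have ex: "1 \<le> r \<and> (\<forall>i. 1 \<le> i \<longrightarrow> i \<le> 1 \<longrightarrow> int (f i) < N)"
    using assms by (simp add: le_Suc_eq)
  have k: "k \<le> r \<and> (\<forall>i. 1 \<le> i \<longrightarrow> i \<le> k \<longrightarrow> int (f i) < N)"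
    unfolding k_def by (rule GreatestI_nat[of _ 1 r]) (use ex in auto)
  have k1: "1 \<le> k" unfolding k_def by (rule Greatest_le_nat[of _ 1 r]) (use ex in auto)
  have "N \<le> int (f (Suc k))" if "k < r"
  proof (rule ccontr)
    assume "\<not> N \<le> int (f (Suc k))"
    then have "Suc k \<le> r \<and> (\<forall>i. 1 \<le> i \<longrightarrow> i \<le> Suc k \<longrightarrow> int (f i) < N)"
      using k that by (auto simp: le_Suc_eq)
    then have "Suc k \<le> k" unfolding k_def by (rule Greatest_le_nat[of _ _ r]) auto
    then show False by simp
  qed
  then show ?thesis using that k k1 by auto
qed

lemma bump_path_restrict_le:
  assumes path: "bump_path P F m r al mm cc" and mN: "int m < N"
    and nP: "N \<notin> int ` ran P" and nF: "N \<notin> int ` ran F"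
  obtains k al' where "bump_path (restrict_le N P) (restrict_le N F) m k al' mm cc"
proof -
  obtain k where k: "1 \<le> k" "k \<le> r" "int (mm k) < N" "k < r \<Longrightarrow> N \<le> int (mm (Suc k))"
    using last_below_threshold[of r mm N] bump_path_height[OF path] bump_path_start[OF path] mN by auto
  have "N < int (mm (Suc k))" if "k < r"
    using k(4)[OF that] ran_avoids[OF nP bump_path_entry[OF path, of "Suc k"]] that by fastforce
  then show ?thesis using that bump_path_restrict_le_below[OF path k(1-3) _ nF] by blast
qed

section \<open>Insertion tableaux of words\<close>

text \<open>\<open>insertion_tableau P A\<close>: \<open>P\<close> is built from the empty tableau by forward insertion of the letters
  of \<open>A\<close>, last letter first, each insertion being described by a bumping path.\<close>

inductive insertion_tableau :: "tab \<Rightarrow> nat list \<Rightarrow> bool" where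
  insertion_tableau_Nil: "insertion_tableau Map.empty []"
| insertion_tableau_Cons: "bump_path P F m r al mm cc \<Longrightarrow> insertion_tableau F A \<Longrightarrow> insertion_tableau P (m # A)"

lemma insertion_tableau_ran: "insertion_tableau P A \<Longrightarrow> ran P \<subseteq> set A"
proof (induction rule: insertion_tableau.induct)
  case (insertion_tableau_Cons P F m r al mm cc A)
  then show ?case using bump_path_ran[OF insertion_tableau_Cons(1)] by auto
qed simp

lemma insertion_tableau_unique: "insertion_tableau P1 A \<Longrightarrow> insertion_tableau P2 A \<Longrightarrow> P1 = P2"
proof (induction P1 A arbitrary: P2 rule: insertion_tableau.induct)
  case insertion_tableau_Nil
  then show ?case by (cases rule: insertion_tableau.cases) auto
next
  case (insertion_tableau_Cons P F m r al mm cc A)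
  from insertion_tableau_Cons.prems obtain F2 r2 al2 mm2 cc2 where
    path2: "bump_path P2 F2 m r2 al2 mm2 cc2" and "insertion_tableau F2 A"
    by (cases rule: insertion_tableau.cases) auto
  then have "F = F2" using insertion_tableau_Cons.IH by blast
  then show ?case using bump_path_unique[OF insertion_tableau_Cons(1)] path2 by blast
qed

lemma insertion_tableau_restrict_le:
  "insertion_tableau P A \<Longrightarrow> N \<notin> int ` set A \<Longrightarrow>
     insertion_tableau (restrict_le N P) (filter (\<lambda>x. int x \<le> N) A)"
proof (induction rule: insertion_tableau.induct)
  case insertion_tableau_Nil
  then show ?case using insertion_tableau.insertion_tableau_Nil by simp
next
  case (insertion_tableau_Cons P F m r al mm cc A)
  have IH: "insertion_tableau (restrict_le N F) (filter (\<lambda>x. int x \<le> N) A)"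
    using insertion_tableau_Cons by simp
  have nF: "N \<notin> int ` ran F"
    using insertion_tableau_ran[OF insertion_tableau_Cons(2)] insertion_tableau_Cons.prems by auto
  have nP: "N \<notin> int ` ran P"
    using bump_path_ran[OF insertion_tableau_Cons(1)] nF insertion_tableau_Cons.prems by auto
  consider "N < int m" | "int m < N" using insertion_tableau_Cons.prems by fastforce
  then show ?case
  proof cases
    case 1
    then show ?thesis using bump_path_restrict_le_above[OF insertion_tableau_Cons(1)] IH by simp
  next
    case 2
    obtain k al' where "bump_path (restrict_le N P) (restrict_le N F) m k al' mm cc"
      using bump_path_restrict_le[OF insertion_tableau_Cons(1) 2 nP nF] .
    then show ?thesis using IH 2 insertion_tableau.insertion_tableau_Cons by simp
  qed
qed


section \<open>Increasing tableaux\<close>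

lemma finite_dom_column_bound:
  fixes M :: "nat \<times> nat \<Rightarrow> 'a option"
  assumes "finite (dom M)"
  obtains B where "\<And>i c. M (i, c) \<noteq> None \<Longrightarrow> c \<le> B"
proof -
  have "c \<le> Max (snd ` dom M)" if "M (i, c) \<noteq> None" for i c
    using assms that by (auto intro!: Max_ge simp: dom_def image_iff) (metis snd_conv)
  then show ?thesis using that by blast
qed

context
  fixes P :: tab
  assumes P: "increasing_tableau P"
begin

lemma increasing_index_pos: "P (i, c) = Some v \<Longrightarrow> 1 \<le> i \<and> 1 \<le> c"
  using P unfolding increasing_tableau_def young_diagram_def by blast

lemma increasing_finite: "finite (dom P)"
  using P unfolding increasing_tableau_def young_diagram_def by blast

lemma increasing_pos: "P x = Some v \<Longrightarrow> 0 < v"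
  using P unfolding increasing_tableau_def ran_def by blast

lemma increasing_closed:
  "P (i, c) \<noteq> None \<Longrightarrow> 1 \<le> i' \<Longrightarrow> i' \<le> i \<Longrightarrow> 1 \<le> c' \<Longrightarrow> c' \<le> c \<Longrightarrow> P (i', c') \<noteq> None"
  using P unfolding increasing_tableau_def young_diagram_def by blast

lemma increasing_right: "P (i, c) = Some u \<Longrightarrow> P (i, c + 1) = Some v \<Longrightarrow> u < v"
  using P unfolding increasing_tableau_def by blast

lemma increasing_down: "P (i, c) = Some u \<Longrightarrow> P (i + 1, c) = Some v \<Longrightarrow> u < v"
  using P unfolding increasing_tableau_def by blast

lemma increasing_row_less:
  assumes u: "P (i, c) = Some u" and v: "P (i, c') = Some v" and lt: "c < c'"
  shows "u < v"
proof -
  have "Suc c \<le> c'" using lt by simp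
  then show ?thesis using v
  proof (induction c' arbitrary: v rule: dec_induct)
    case base
    then show ?case using increasing_right[OF u] by simp
  next
    case (step n)
    obtain w where w: "P (i, n) = Some w"
      using increasing_closed[of i "Suc n" i n] step increasing_index_pos[OF step(4)] by fastforce
    then show ?case using step.IH[OF w] increasing_right[OF w] step by simp
  qed
qed

lemma increasing_row_le: "P (i, c) = Some u \<Longrightarrow> P (i, c') = Some v \<Longrightarrow> c \<le> c' \<Longrightarrow> u \<le> v"
  using increasing_row_less by (cases "c = c'") fastforce+

lemma increasing_row_inj: "P (i, c) = Some u \<Longrightarrow> P (i, c') = Some u \<Longrightarrow> c = c'"
  using increasing_row_less by (metis less_irrefl linorder_neqE_nat)

lemma increasing_row_less_col: "P (i, c) = Some u \<Longrightarrow> P (i, c') = Some v \<Longrightarrow> u < v \<Longrightarrow> c < c'"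
  using increasing_row_le by (metis leD linorder_not_le)

lemma successor_not_in_row:
  assumes "P (r, c) = Some v" "P (r, Suc c) = None"
  shows "v + 1 \<notin> row P r"
proof
  assume "v + 1 \<in> row P r"
  then obtain c' where c': "P (r, c') = Some (v + 1)" unfolding row_def by auto
  have "c < c'" using increasing_row_less_col[OF assms(1) c'] by simp
  then show False
    using increasing_closed[of r c' r "Suc c"] c' increasing_index_pos[OF assms(1)] assms(2) by auto
qed

lemma greatest_column_below:
  assumes w: "P (Suc i, c) = Some w" and i: "1 \<le> i"
  defines "g \<equiv> GREATEST c'. \<exists>v w. P (i, c') = Some v \<and> P (Suc i, c) = Some w \<and> v < w"
  shows "\<exists>v. P (i, g) = Some v \<and> v < w" and "c \<le> g"
    and "\<And>c' v. P (i, c') = Some v \<Longrightarrow> v < w \<Longrightarrow> c' \<le> g"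
proof -
  define S where "S = (\<lambda>c'. \<exists>v w. P (i, c') = Some v \<and> P (Suc i, c) = Some w \<and> v < w)"
  obtain v where v: "P (i, c) = Some v"
    using increasing_closed[of "Suc i" c i c] w i increasing_index_pos[OF w] by fastforce
  have Sc: "S c" unfolding S_def using v w increasing_down[OF v] by auto
  obtain B where B: "\<And>i c. P (i, c) \<noteq> None \<Longrightarrow> c \<le> B"
    using finite_dom_column_bound[OF increasing_finite] by blast
  have bound: "\<And>y. S y \<Longrightarrow> y \<le> B" unfolding S_def using B by fastforce
  have g: "g = Greatest S" unfolding g_def S_def ..
  have "S g" unfolding g by (rule GreatestI_nat[of S c B, OF Sc bound])
  then show "\<exists>v. P (i, g) = Some v \<and> v < w" unfolding S_def using w by auto
  show "c \<le> g" unfolding g by (rule Greatest_le_nat[of S c B, OF Sc bound])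
  show "c' \<le> g" if "P (i, c') = Some v" "v < w" for c' v
    unfolding g by (rule Greatest_le_nat[of S c' B, OF _ bound]) (use that w in \<open>auto simp: S_def\<close>)
qed

end

section \<open>The bumping path of reverse insertion\<close>

definition bval :: "tab \<Rightarrow> nat \<Rightarrow> nat \<Rightarrow> nat \<Rightarrow> nat" where
  "bval P r c i = the (P (i, bcol P r c i))"

lemma bcol_self: "bcol P r c r = c"
  unfolding bcol_def by simp

lemma bcol_less:
  assumes "i < r"
  shows "bcol P r c i = (GREATEST c'. \<exists>v w. P (i, c') = Some v \<and> P (Suc i, bcol P r c (Suc i)) = Some w \<and> v < w)"
proof -
  have "r - i = Suc (r - Suc i)" "r - Suc (r - Suc i) = i" "r - (r - Suc i) = Suc i" using assms by auto
  then show ?thesis unfolding bcol_def by (simp only: bcol_d.simps)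
qed

locale outer_cell =
  fixes P :: tab and r c :: nat
  assumes increasing: "increasing_tableau P"
    and cell: "P (r, c) \<noteq> None"
    and outer: "P (r, Suc c) = None"
begin

abbreviation cc where "cc \<equiv> bcol P r c"
abbreviation mm where "mm \<equiv> bval P r c"

lemma height_pos: "1 \<le> r"
  using cell increasing_index_pos[OF increasing] by fastforce

lemma path_entry:
  assumes "1 \<le> i" "i \<le> r"
  shows "P (i, cc i) = Some (mm i)"
  using assms(2)
proof (induction rule: inc_induct)
  case base
  then show ?case using cell bcol_self unfolding bval_def by fastforce
next
  case (step n)
  have "1 \<le> n" using assms(1) step(1) by simp
  then obtain v where "P (n, cc n) = Some v"
    using greatest_column_below(1)[OF increasing step(3)] bcol_less[OF step(2)] by auto
  then show ?case unfolding bval_def by simp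
qed

lemma path_col_pos: "1 \<le> i \<Longrightarrow> i \<le> r \<Longrightarrow> 1 \<le> cc i"
  using increasing_index_pos[OF increasing path_entry] by simp

context
  fixes i assumes i: "1 \<le> i" "i < r"
begin

lemma path_less: "mm i < mm (Suc i)"
  using greatest_column_below(1)[OF increasing path_entry[of "Suc i"] i(1)] bcol_less[OF i(2)]
    path_entry[OF i(1)] i by fastforce

lemma path_col_greatest: "P (i, c') = Some v \<Longrightarrow> v < mm (Suc i) \<Longrightarrow> c' \<le> cc i"
  using greatest_column_below(3)[OF increasing path_entry[of "Suc i"] i(1)] bcol_less[OF i(2)] i
  by simp

lemma path_col_mono: "cc (Suc i) \<le> cc i"
  using greatest_column_below(2)[OF increasing path_entry[of "Suc i"] i(1)] bcol_less[OF i(2)] i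
  by simp

lemma right_of_path: "P (i, c') = Some v \<Longrightarrow> cc i < c' \<Longrightarrow> mm (Suc i) \<le> v"
  using path_col_greatest by fastforce

lemma right_neighbour_of_path:
  assumes "mm (Suc i) \<in> row P i"
  shows "P (i, Suc (cc i)) = Some (mm (Suc i))"
proof -
  obtain c' where c': "P (i, c') = Some (mm (Suc i))" using assms unfolding row_def by auto
  have "cc i < c'" using increasing_row_less_col[OF increasing path_entry c' path_less] i by simp
  then obtain v where v: "P (i, Suc (cc i)) = Some v"
    using increasing_closed[OF increasing, of i c' i "Suc (cc i)"] c' i by fastforce
  have "mm (Suc i) \<le> v" using right_of_path[OF v] by simp
  moreover have "v \<le> mm (Suc i)" using increasing_row_le[OF increasing v c'] \<open>cc i < c'\<close> by simp
  ultimately show ?thesis using v by simp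
qed

lemma path_successor:
  assumes "mm i + 1 \<in> row P i"
  shows "mm (Suc i) = mm i + 1"
proof -
  obtain c' where c': "P (i, c') = Some (mm i + 1)" using assms unfolding row_def by auto
  have "cc i < c'" using increasing_row_less_col[OF increasing path_entry c'] i by simp
  then have "mm (Suc i) \<le> mm i + 1" using right_of_path[OF c'] by simp
  then show ?thesis using path_less by simp
qed

end

end


section \<open>Reverse insertion follows its bumping path\<close>

lemma rloop_unfold:
  fixes P P' :: tab and r c j :: nat and ub :: enat and al :: bool
  defines "ci \<equiv> bcol P r c (Suc j)"
  defines "mi \<equiv> bval P r c (Suc j)"
  defines "X \<equiv> {x. ejectable P' (Suc (Suc j)) x \<and> mi < x \<and> enat x < ub}"
  shows "rloop P r c (Suc j) P' al ub =
     (if mi + 1 \<in> row P (Suc j) then rloop P r c j P' al (enat mi)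
      else if al \<and> ub \<noteq> \<infinity> \<and> the_enat ub \<notin> row P (Suc j)
        then rloop P r c j (P'((Suc j, ci) := Some (the_enat ub))) True (enat mi)
      else if X \<noteq> {} then rloop P r c j (P'((Suc j, ci) := Some (Max X))) True (enat mi)
      else rloop P r c j P' False (enat mi))"
  unfolding ci_def mi_def X_def bval_def by (simp only: rloop.simps Let_def) (simp only: Suc_eq_plus1)

declare rloop.simps(2) [simp del]

lemma rloop_Suc_shape:
  obtains P'' al' where "rloop P r c (Suc j) P' al ub = rloop P r c j P'' al' (enat (bval P r c (Suc j)))"
    and "\<And>x. x \<noteq> (Suc j, bcol P r c (Suc j)) \<Longrightarrow> P'' x = P' x"
proof -
  let ?F = "\<lambda>y. P'((Suc j, bcol P r c (Suc j)) := y)"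
  have "\<exists>P'' al'. rloop P r c (Suc j) P' al ub = rloop P r c j P'' al' (enat (bval P r c (Suc j))) \<and>
      (P'' = P' \<or> (\<exists>y. P'' = ?F y))"
    unfolding rloop_unfold by (auto split: if_splits)
  then show ?thesis using that by fastforce
qed

lemma rloop_unchanged:
  "i = 0 \<or> n < i \<or> c' \<noteq> bcol P r c i \<Longrightarrow> rloop P r c n P' al ub (i, c') = P' (i, c')"
proof (induction n arbitrary: P' al ub)
  case (Suc j)
  obtain P'' al' where "rloop P r c (Suc j) P' al ub = rloop P r c j P'' al' (enat (bval P r c (Suc j)))"
    "\<And>x. x \<noteq> (Suc j, bcol P r c (Suc j)) \<Longrightarrow> P'' x = P' x"
    using rloop_Suc_shape[of P r c j P' al ub] by blast
  moreover have "(i, c') \<noteq> (Suc j, bcol P r c (Suc j))" "i = 0 \<or> j < i \<or> c' \<noteq> bcol P r c i"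
    using Suc.prems by auto
  ultimately show ?case using Suc.IH by simp
qed simp

lemma bump_step_cong_below:
  assumes "\<And>i' c. i \<le> i' \<Longrightarrow> F1 (i', c) = F2 (i', c)"
  shows "bump_step P F1 i ci mi m' \<longleftrightarrow> bump_step P F2 i ci mi m'"
proof -
  have "\<And>x. ejectable F1 (Suc i) x \<longleftrightarrow> ejectable F2 (Suc i) x" "F1 (i, ci) = F2 (i, ci)"
    using ejectable_cong_iff[of "Suc i" F1 F2] assms by auto
  then show ?thesis unfolding bump_step_def next_bump_def by simp
qed

lemma bump_end_cong_below:
  assumes "\<And>i' c. i \<le> i' \<Longrightarrow> F1 (i', c) = F2 (i', c)"
  shows "bump_end P F1 i ci mi al \<longleftrightarrow> bump_end P F2 i ci mi al"
proof -
  have "\<And>x. ejectable F1 (Suc i) x \<longleftrightarrow> ejectable F2 (Suc i) x" "F1 (i, ci) = F2 (i, ci)"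
    using ejectable_cong_iff[of "Suc i" F1 F2] assms by auto
  then show ?thesis unfolding bump_end_def by simp
qed

lemma not_in_row_update:
  assumes P: "increasing_tableau P" and Pi: "P (i, ci) = Some mi"
    and same: "\<And>c'. P' (i, c') = P (i, c')" and ne: "y \<noteq> mi"
  shows "mi \<notin> row (P'((i, ci) := Some y)) i"
  unfolding row_def using increasing_row_inj[OF P Pi] same ne by (auto split: if_splits)

context outer_cell
begin

text \<open>When row \<open>n\<close> is about to be processed, \<open>al\<close> and \<open>ub\<close> are the quantities \<open>\<alpha>\<^sub>n\<^sub>+\<^sub>1\<close> and \<open>m\<^sub>n\<^sub>+\<^sub>1\<close>
  of the loop.\<close>

definition loop_inv :: "nat \<Rightarrow> tab \<Rightarrow> bool \<Rightarrow> enat \<Rightarrow> bool" where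
  "loop_inv n P' al ub \<longleftrightarrow> (n = r \<and> \<not> al \<and> ub = \<infinity>) \<or>
     (n < r \<and> ub = enat (mm (Suc n)) \<and> (al \<longleftrightarrow> \<not> ejectable P' (Suc n) (mm (Suc n))))"

definition row_done :: "tab \<Rightarrow> nat \<Rightarrow> bool" where
  "row_done F i \<longleftrightarrow> (i < r \<longrightarrow> bump_step P F i (cc i) (mm i) (mm (Suc i))) \<and>
     (i = r \<longrightarrow> bump_end P F r (cc r) (mm r) False)"

lemma row_done_cong:
  assumes "\<And>i' c. i \<le> i' \<Longrightarrow> F1 (i', c) = F2 (i', c)"
  shows "row_done F1 i \<longleftrightarrow> row_done F2 i"
  unfolding row_done_def using bump_step_cong_below[of i F1 F2, OF assms] bump_end_cong_below[of i F1 F2, OF assms]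
  by auto

context
  fixes i P' al ub
  assumes i: "1 \<le> i" "i \<le> r" and row_i: "\<And>c'. P' (i, c') = P (i, c')"
    and inv: "loop_inv i P' al ub"
begin

lemma entry_i: "P' (i, cc i) = Some (mm i)"
  using row_i path_entry[OF i] by simp

lemma row_done_unchanged:
  assumes D: "mm i + 1 \<in> row P i"
  shows "row_done P' i" and "al \<longleftrightarrow> \<not> ejectable P' i (mm i)"
proof -
  have "i \<noteq> r" using successor_not_in_row[OF increasing path_entry[OF i] ] D outer bcol_self by force
  then have lt: "i < r" using i by simp
  then have ub: "ub = enat (mm (Suc i))" "al \<longleftrightarrow> \<not> ejectable P' (Suc i) (mm (Suc i))"
    using inv unfolding loop_inv_def by auto
  have succ: "mm (Suc i) = mm i + 1" using path_successor[OF i(1) lt D] .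
  have "row P' i = row P i" using row_i row_cong by metis
  then have "ejectable P' i (mm i) \<longleftrightarrow> ejectable P' (Suc i) (mm i + 1)"
    using ejectable_succ_iff path_entry[OF i] D unfolding row_def by blast
  then show "al \<longleftrightarrow> \<not> ejectable P' i (mm i)" using ub succ by simp
  show "row_done P' i"
    unfolding row_done_def bump_step_def using lt entry_i D succ by simp
qed

lemma row_done_replace:
  assumes nD: "mm i + 1 \<notin> row P i" and al: "al" and ub: "ub = enat m'" and m': "m' \<notin> row P i"
  defines "P'' \<equiv> P'((i, cc i) := Some m')"
  shows "row_done P'' i" and "\<not> ejectable P'' i (mm i)"
proof -
  have lt: "i < r" and m'_def: "m' = mm (Suc i)" and nej: "\<not> ejectable P' (Suc i) m'"
    using inv al ub unfolding loop_inv_def by auto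
  have "m' \<noteq> mm i" using path_less[OF i(1) lt] m'_def by simp
  then show "\<not> ejectable P'' i (mm i)"
    using not_in_row_update[OF increasing path_entry[OF i] row_i] ejectable_in_row
    unfolding P''_def by blast
  have "\<not> ejectable P'' (Suc i) m'" using nej ejectable_cong_iff[of "Suc i" P'' P'] unfolding P''_def by auto
  then show "row_done P'' i"
    unfolding row_done_def bump_step_def P''_def using lt nD m' m'_def path_less[OF i(1) lt] by auto
qed

lemma eject_flag:
  assumes nD: "mm i + 1 \<notin> row P i"
  shows "y \<noteq> mm i \<longleftrightarrow> \<not> ejectable (P'((i, cc i) := Some y)) i (mm i)"
proof (cases "y = mm i")
  case True
  then have "P'((i, cc i) := Some y) = P'" using entry_i by auto
  moreover have "row P' i = row P i" using row_i row_cong by metis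
  then have "ejectable P' i (mm i)"
    using nD path_entry[OF i] ejectable.ej_stop unfolding row_def by (metis (mono_tags) mem_Collect_eq)
  ultimately show ?thesis using True by simp
next
  case False
  then show ?thesis
    using not_in_row_update[OF increasing path_entry[OF i] row_i] ejectable_in_row by blast
qed

lemma row_done_eject:
  assumes nD: "mm i + 1 \<notin> row P i" and nDR: "\<not> (al \<and> ub \<noteq> \<infinity> \<and> the_enat ub \<notin> row P i)"
    and y: "y = mm i \<or> (ejectable P' (Suc i) y \<and> mm i < y \<and> enat y < ub)"
    and y_max: "\<And>z. ejectable P' (Suc i) z \<Longrightarrow> y < z \<Longrightarrow> \<not> enat z < ub"
  defines "P'' \<equiv> P'((i, cc i) := Some y)"
  shows "row_done P'' i"
proof -
  have ej: "ejectable P'' (Suc i) z \<longleftrightarrow> ejectable P' (Suc i) z" for z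
    using ejectable_cong_iff[of "Suc i" P'' P'] unfolding P''_def by auto
  have y_ge: "mm i \<le> y" using y by auto
  show ?thesis
  proof (cases "i < r")
    case lt: True
    define m' where "m' = mm (Suc i)"
    have ub: "ub = enat m'" "al \<longleftrightarrow> \<not> ejectable P' (Suc i) m'"
      using inv lt unfolding loop_inv_def m'_def by auto
    have "next_bump P P'' i (cc i) y m'"
      unfolding next_bump_def
    proof (intro conjI allI impI)
      show "y < m'" using y ub path_less[OF i(1) lt] unfolding m'_def by auto
      show "P (i, Suc (cc i)) = Some m' \<or> ejectable P'' (Suc i) m'"
        using nDR ub ej right_neighbour_of_path[OF i(1) lt] unfolding m'_def by auto
      show "\<not> ejectable P'' (Suc i) z" if "y < z" "z < m'" for z
        using y_max that ub ej by auto
      show "m' \<le> w" if "P (i, Suc (cc i)) = Some w" for w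
        using right_of_path[OF i(1) lt that] unfolding m'_def by simp
    qed
    moreover have "\<not> (mm i < y \<and> \<not> ejectable P'' (Suc i) y)" using y ej by auto
    moreover have "P'' (i, cc i) = Some y" unfolding P''_def by simp
    ultimately have "bump_step P P'' i (cc i) (mm i) m'"
      unfolding bump_step_def using nD y_ge by (intro exI[of _ y]) auto
    then show ?thesis unfolding row_done_def m'_def using lt by simp
  next
    case False
    then have r: "i = r" using i by simp
    then have "ub = \<infinity>" using inv unfolding loop_inv_def by auto
    then have "\<forall>z. y < z \<longrightarrow> \<not> ejectable P'' (Suc r) z" using y_max ej r by auto
    moreover have "y = mm r \<or> ejectable P'' (Suc r) y" using y ej r by auto
    moreover have "P'' (r, c) = Some y" unfolding P''_def using r bcol_self by simp
    ultimately have "bump_end P P'' r c (mm r) False"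
      unfolding bump_end_def if_False using r y_ge nD outer by blast
    then show ?thesis unfolding row_done_def using r bcol_self by simp
  qed
qed

text \<open>The four rules D, DR, IR, NR of one pass through the loop; NR is merged into IR by writing
  \<open>mm i\<close> back into its own cell.\<close>

lemma rloop_cases:
  assumes j: "i = Suc j" and fin: "finite (dom P')"
  obtains (D) "mm i + 1 \<in> row P i" "rloop P r c i P' al ub = rloop P r c j P' al (enat (mm i))"
  | (DR) "mm i + 1 \<notin> row P i" "al" "ub = enat (the_enat ub)" "the_enat ub \<notin> row P i"
      "rloop P r c i P' al ub = rloop P r c j (P'((i, cc i) := Some (the_enat ub))) True (enat (mm i))"
  | (eject) y where "mm i + 1 \<notin> row P i" "\<not> (al \<and> ub \<noteq> \<infinity> \<and> the_enat ub \<notin> row P i)"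
      "y = mm i \<or> (ejectable P' (Suc i) y \<and> mm i < y \<and> enat y < ub)"
      "\<And>z. ejectable P' (Suc i) z \<Longrightarrow> y < z \<Longrightarrow> \<not> enat z < ub"
      "rloop P r c i P' al ub = rloop P r c j (P'((i, cc i) := Some y)) (y \<noteq> mm i) (enat (mm i))"
proof -
  define X where "X = {x. ejectable P' (Suc i) x \<and> mm i < x \<and> enat x < ub}"
  have eq: "rloop P r c i P' al ub =
     (if mm i + 1 \<in> row P i then rloop P r c j P' al (enat (mm i))
      else if al \<and> ub \<noteq> \<infinity> \<and> the_enat ub \<notin> row P i
        then rloop P r c j (P'((i, cc i) := Some (the_enat ub))) True (enat (mm i))
      else if X \<noteq> {} then rloop P r c j (P'((i, cc i) := Some (Max X))) True (enat (mm i))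
      else rloop P r c j P' False (enat (mm i)))"
    unfolding X_def j by (rule rloop_unfold)
  have "X \<subseteq> row P' (Suc i)" unfolding X_def using ejectable_in_row by blast
  then have "finite X" using finite_row[OF fin] finite_subset by blast
  then have X_max: "X \<noteq> {} \<Longrightarrow> Max X \<in> X" "\<And>z. z \<in> X \<Longrightarrow> z \<le> Max X" by auto
  consider "mm i + 1 \<in> row P i" | "mm i + 1 \<notin> row P i" "al \<and> ub \<noteq> \<infinity> \<and> the_enat ub \<notin> row P i"
    | "mm i + 1 \<notin> row P i" "\<not> (al \<and> ub \<noteq> \<infinity> \<and> the_enat ub \<notin> row P i)" "X \<noteq> {}"
    | "mm i + 1 \<notin> row P i" "\<not> (al \<and> ub \<noteq> \<infinity> \<and> the_enat ub \<notin> row P i)" "X = {}"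
    by blast
  then show thesis
  proof cases
    case 1
    then show ?thesis using D unfolding eq by (simp only: if_True)
  next
    case 2
    have ub: "ub = enat (the_enat ub)" using 2 by (cases ub) auto
    have "rloop P r c i P' al ub = rloop P r c j (P'((i, cc i) := Some (the_enat ub))) True (enat (mm i))"
      unfolding eq using 2 by (simp only: if_True if_False simp_thms)
    then show ?thesis using DR[OF _ _ ub] 2 by blast
  next
    case 3
    moreover have "Max X \<noteq> mm i" "ejectable P' (Suc i) (Max X) \<and> mm i < Max X \<and> enat (Max X) < ub"
      "\<And>z. ejectable P' (Suc i) z \<Longrightarrow> Max X < z \<Longrightarrow> \<not> enat z < ub"
      using X_max 3 unfolding X_def by fastforce+
    moreover have "rloop P r c i P' al ub = rloop P r c j (P'((i, cc i) := Some (Max X))) True (enat (mm i))"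
      unfolding eq using 3 by (simp only: if_True if_False simp_thms)
    ultimately show ?thesis using eject[of "Max X"] by simp
  next
    case 4
    moreover have "P'((i, cc i) := Some (mm i)) = P'" using entry_i by auto
    moreover have "rloop P r c i P' al ub = rloop P r c j P' False (enat (mm i))"
      unfolding eq using 4 by (simp only: if_True if_False simp_thms)
    ultimately show ?thesis using eject[of "mm i"] unfolding X_def by simp
  qed
qed

lemma rloop_step:
  assumes j: "i = Suc j" and fin: "finite (dom P')"
  obtains P'' al' where "rloop P r c i P' al ub = rloop P r c j P'' al' (enat (mm i))"
    and "\<And>x. x \<noteq> (i, cc i) \<Longrightarrow> P'' x = P' x"
    and "row_done P'' i" and "al' \<longleftrightarrow> \<not> ejectable P'' i (mm i)"
proof (cases rule: rloop_cases[OF j fin, case_names D DR eject])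
  case D
  show ?thesis by (rule that[OF D(2)]) (use row_done_unchanged[OF D(1)] in auto)
next
  case DR
  show ?thesis by (rule that[OF DR(5)]) (use row_done_replace[OF DR(1-4)] in auto)
next
  case (eject y)
  show ?thesis by (rule that[OF eject(5)]) (use row_done_eject[OF eject(1-4)] eject_flag[OF eject(1)] in auto)
qed

end

lemma rloop_row_done:
  "n \<le> r \<Longrightarrow> finite (dom P') \<Longrightarrow> (\<And>i c'. 1 \<le> i \<Longrightarrow> i \<le> n \<Longrightarrow> P' (i, c') = P (i, c')) \<Longrightarrow>
     loop_inv n P' al ub \<Longrightarrow> 1 \<le> i \<Longrightarrow> i \<le> n \<Longrightarrow> row_done (rloop P r c n P' al ub) i"
proof (induction n arbitrary: P' al ub)
  case (Suc j)
  have j: "1 \<le> Suc j" "Suc j \<le> r" using Suc.prems(1) by auto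
  obtain P'' al' where step: "rloop P r c (Suc j) P' al ub = rloop P r c j P'' al' (enat (mm (Suc j)))"
    and upd: "\<And>x. x \<noteq> (Suc j, cc (Suc j)) \<Longrightarrow> P'' x = P' x"
    and row_Suc: "row_done P'' (Suc j)" and al': "al' \<longleftrightarrow> \<not> ejectable P'' (Suc j) (mm (Suc j))"
    using rloop_step[OF j Suc.prems(3)[OF j(1) order.refl] Suc.prems(4) refl Suc.prems(2)] by blast
  show ?case
  proof (cases "i = Suc j")
    case True
    have "row_done (rloop P r c j P'' al' (enat (mm (Suc j)))) i \<longleftrightarrow> row_done P'' i"
      by (rule row_done_cong) (use rloop_unchanged True in auto)
    then show ?thesis using step row_Suc True by simp
  next
    case False
    have "dom P'' \<subseteq> insert (Suc j, cc (Suc j)) (dom P')" using upd by auto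
    then have "finite (dom P'')" using Suc.prems(2) finite_subset by blast
    moreover have "P'' (i', c') = P (i', c')" if "1 \<le> i'" "i' \<le> j" for i' c'
      using upd[of "(i', c')"] Suc.prems(3)[of i' c'] that by simp
    moreover have "loop_inv j P'' al' (enat (mm (Suc j)))"
      using Suc.prems(1) al' unfolding loop_inv_def by simp
    ultimately show ?thesis
      using Suc.IH[of P'' al' "enat (mm (Suc j))"] Suc.prems(1,5,6) False step by simp
  qed
qed simp

context
  fixes al F m
  assumes ins: "rev_insert P (r, c) al = (F, m)"
begin

lemma rev_insert_rloop:
  "F = rloop P r c (if al then r - 1 else r) (if al then P((r, c) := None) else P) al
     (if al then enat (mm r) else \<infinity>)"
  using ins bcol_self unfolding rev_insert_def bval_def by (cases al) auto

lemma rev_insert_output: "m = mm 1"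
  using ins unfolding rev_insert_def bval_def by simp

lemma rev_insert_row_done:
  assumes i: "1 \<le> i" "i \<le> r" "i < r \<or> \<not> al"
  shows "row_done F i"
proof -
  define P0 where "P0 = (if al then P((r, c) := None) else P)"
  define n where "n = (if al then r - 1 else r)"
  have n: "n \<le> r" "al \<Longrightarrow> n < r" "i \<le> n" using height_pos i unfolding n_def by auto
  have fin: "finite (dom P0)" using increasing_finite[OF increasing] unfolding P0_def by auto
  have rows: "P0 (i, c') = P (i, c')" if "1 \<le> i" "i \<le> n" for i c'
    using that n unfolding P0_def by auto
  have "loop_inv n P0 al (if al then enat (mm r) else \<infinity>)"
  proof (cases al)
    case True
    have "mm r \<notin> row P0 r"
      using path_entry[OF height_pos order.refl] increasing_row_inj[OF increasing] bcol_self True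
      unfolding P0_def row_def by (auto split: if_splits)
    then show ?thesis using True height_pos ejectable_in_row unfolding loop_inv_def n_def by auto
  qed (simp add: loop_inv_def n_def)
  then show ?thesis
    using rloop_row_done[OF n(1) fin rows _ i(1) n(3)] rev_insert_rloop unfolding P0_def n_def by simp
qed

lemma rev_insert_off_path:
  assumes "\<not> (1 \<le> i \<and> i \<le> r \<and> c' = cc i)"
  shows "F (i, c') = P (i, c')"
proof -
  have off: "i = 0 \<or> (if al then r - 1 else r) < i \<or> c' \<noteq> cc i" "(i, c') \<noteq> (r, c)"
    using assms bcol_self height_pos by auto
  show ?thesis using rloop_unchanged[OF off(1)] rev_insert_rloop off(2) by auto
qed

lemma rev_insert_deleted: "al \<Longrightarrow> F (r, c) = None"
  using rloop_unchanged[of r "r - 1" c P r c] rev_insert_rloop height_pos by simp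

lemma rev_insert_bump_path: "bump_path P F m r al mm cc"
proof (rule bump_pathI)
  show "1 \<le> r" "m = mm 1" by (fact height_pos, fact rev_insert_output)
  show "P (0, c') = F (0, c')" for c' using rev_insert_off_path[of 0 c'] by simp
  show "P (i, c') = F (i, c')" if "r < i" for i c' using rev_insert_off_path[of i c'] that by simp
  show "1 \<le> cc i" "P (i, cc i) = Some (mm i)" if "1 \<le> i" "i \<le> r" for i
    using path_col_pos[OF that] path_entry[OF that] by auto
  show "mm i < mm (Suc i)" if "1 \<le> i" "i < r" for i using path_less[OF that] .
  show "P (i, c') = F (i, c')" if "1 \<le> i" "i \<le> r" "c' \<noteq> cc i" for i c'
    using rev_insert_off_path[of i c'] that by simp
  show "bump_step P F i (cc i) (mm i) (mm (Suc i))" if "1 \<le> i" "i < r" for i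
    using rev_insert_row_done[of i] that unfolding row_done_def by simp
next
  fix i c' assume i: "1 \<le> i" "i \<le> r" "1 \<le> c'" "c' < cc i"
  obtain v where v: "P (i, c') = Some v"
    using increasing_closed[OF increasing, of i "cc i" i c'] path_entry[OF i(1,2)] i by fastforce
  then show "\<exists>v. F (i, c') = Some v \<and> v < mm i"
    using rev_insert_off_path[of i c'] i increasing_row_less[OF increasing v path_entry[OF i(1,2)]] by simp
next
  fix i v assume i: "1 \<le> i" "i \<le> r" and Fv: "F (i, cc i) = Some v"
  show "mm i \<le> v"
  proof (cases "i < r")
    case True
    then show ?thesis using rev_insert_row_done[of i] i Fv unfolding row_done_def bump_step_def by auto
  next
    case False
    then have "i = r" "\<not> al" using i rev_insert_deleted Fv bcol_self by auto
    then show ?thesis using rev_insert_row_done[of r] height_pos Fv unfolding row_done_def bump_end_def by auto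
  qed
next
  show "bump_end P F r (cc r) (mm r) al"
  proof (cases al)
    case True
    then show ?thesis using rev_insert_deleted bcol_self unfolding bump_end_def by simp
  next
    case False
    then show ?thesis using rev_insert_row_done[of r] height_pos unfolding row_done_def by simp
  qed
qed

end
end


section \<open>Reverse insertion preserves increasing tableaux\<close>

lemma bump_step_bounds:
  assumes "bump_step P F i ci mi m'" "mi < m'"
  shows "\<exists>y. F (i, ci) = Some y \<and> mi \<le> y \<and> y \<le> m' \<and>
    (y = m' \<longrightarrow> m' \<notin> row P i \<and> \<not> ejectable F (Suc i) m')"
  using assms unfolding bump_step_def next_bump_def by (auto split: if_splits)

locale reverse_insertion = outer_cell +
  fixes F m al
  assumes path: "bump_path P F m r al mm cc"
    and below: "P (Suc r, c) = None"
begin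

lemma F_off_path: "\<not> (1 \<le> i \<and> i \<le> r \<and> c' = cc i) \<Longrightarrow> F (i, c') = P (i, c')"
  using bump_path_off_path[OF path] by simp

lemma F_on_path:
  assumes "1 \<le> i" "i < r"
  obtains y where "F (i, cc i) = Some y" "mm i \<le> y" "y \<le> mm (Suc i)"
    and "y = mm (Suc i) \<Longrightarrow> mm (Suc i) \<notin> row P i \<and> \<not> ejectable F (Suc i) (mm (Suc i))"
  using bump_step_bounds[OF bump_path_step[OF path assms] bump_path_less[OF path assms]] that by blast

lemma F_end: "F (r, c) = None \<longleftrightarrow> al"
  using bump_path_end[OF path] bcol_self unfolding bump_end_def by (cases al) auto

lemma dom_F: "F x \<noteq> None \<longleftrightarrow> P x \<noteq> None \<and> \<not> (al \<and> x = (r, c))"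
proof (cases x)
  case (Pair i c')
  show ?thesis
  proof (cases "1 \<le> i \<and> i \<le> r \<and> c' = cc i")
    case True
    then have "P x \<noteq> None" using path_entry Pair by simp
    moreover have "F x \<noteq> None \<longleftrightarrow> \<not> (al \<and> x = (r, c))"
    proof (cases "i = r")
      case True
      then show ?thesis using F_end Pair \<open>1 \<le> i \<and> i \<le> r \<and> c' = cc i\<close> bcol_self by auto
    next
      case False
      then show ?thesis
        using F_on_path[of i] Pair \<open>1 \<le> i \<and> i \<le> r \<and> c' = cc i\<close> by (metis le_neq_implies_less option.distinct(1) prod.inject)
    qed
    ultimately show ?thesis by simp
  next
    case False
    then show ?thesis using F_off_path Pair bcol_self height_pos by auto
  qed
qed

lemma young_diagram_dom_F: "young_diagram (dom F)"
  unfolding young_diagram_def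
proof (intro conjI allI impI ballI)
  have "dom F \<subseteq> dom P" using dom_F by blast
  then show "finite (dom F)" using increasing_finite[OF increasing] finite_subset by blast
next
  fix x assume "x \<in> dom F"
  then show "case x of (r, c) \<Rightarrow> 1 \<le> r \<and> 1 \<le> c"
    using dom_F increasing_index_pos[OF increasing] by (cases x) blast
next
  fix i c' i' c'' assume h: "(i, c') \<in> dom F" "1 \<le> i'" "i' \<le> i" "1 \<le> c''" "c'' \<le> c'"
  have P: "P (i, c') \<noteq> None" "\<not> (al \<and> (i, c') = (r, c))" using h(1) dom_F by blast+
  have "\<not> (al \<and> (i', c'') = (r, c))"
  proof
    assume rc: "al \<and> (i', c'') = (r, c)"
    then consider "r < i" | "i = r" "c < c'" using P(2) h by fastforce
    then show False
    proof cases
      case 1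
      then have "P (Suc r, c) \<noteq> None" using increasing_closed[OF increasing P(1), of "Suc r" c] rc h by auto
      then show False using below by simp
    next
      case 2
      then have "P (r, Suc c) \<noteq> None" using increasing_closed[OF increasing P(1), of r "Suc c"] rc h by auto
      then show False using outer by simp
    qed
  qed
  then show "(i', c'') \<in> dom F" using increasing_closed[OF increasing P(1) h(2-5)] dom_F by blast
qed

lemma F_pos: "F x = Some v \<Longrightarrow> 0 < v"
proof (cases x)
  case (Pair i c')
  assume Fv: "F x = Some v"
  show ?thesis
  proof (cases "1 \<le> i \<and> i \<le> r \<and> c' = cc i")
    case True
    then have "mm i \<le> v" using bump_path_at[OF path] Fv Pair by auto
    moreover have "0 < mm i" using increasing_pos[OF increasing] path_entry True by blast
    ultimately show ?thesis by simp
  next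
    case False
    then show ?thesis using F_off_path Fv Pair increasing_pos[OF increasing] by metis
  qed
qed

lemma F_index_pos: "F (i, c') = Some u \<Longrightarrow> 1 \<le> i"
  using F_off_path[of i c'] increasing_index_pos[OF increasing, of 0 c' u] by (cases "i = 0") auto

lemma F_row_strict:
  assumes Fu: "F (i, c') = Some u" and Fv: "F (i, c' + 1) = Some v"
  shows "u < v"
proof -
  have i1: "1 \<le> i" using F_index_pos[OF Fu] .
  consider (off) "\<not> (i \<le> r \<and> c' = cc i)" "\<not> (i \<le> r \<and> c' + 1 = cc i)" | (left) "i \<le> r" "c' + 1 = cc i"
    | (on) "i \<le> r" "c' = cc i" by blast
  then show ?thesis
  proof cases
    case off
    then show ?thesis using F_off_path Fu Fv increasing_right[OF increasing] by metis
  next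
    case left
    then have "u < mm i"
      using increasing_right[OF increasing] F_off_path[of i c'] Fu path_entry[OF i1 left(1)] by auto
    moreover have "mm i \<le> v" using bump_path_at[OF path i1 left(1)] Fv left(2) by simp
    ultimately show ?thesis by simp
  next
    case on
    have Pv: "P (i, Suc (cc i)) = Some v" using F_off_path[of i "c' + 1"] Fv on by simp
    then have lt: "i < r" using on outer bcol_self by (cases "i = r") auto
    obtain y where y: "F (i, cc i) = Some y" "y \<le> mm (Suc i)" "y = mm (Suc i) \<Longrightarrow> mm (Suc i) \<notin> row P i"
      using F_on_path[OF i1 lt] by metis
    have v: "mm (Suc i) \<le> v" "v \<in> row P i" using right_of_path[OF i1 lt Pv] Pv unfolding row_def by auto
    have "u = y" using y(1) Fu on by simp
    moreover have "y \<noteq> v" using y(2,3) v by force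
    ultimately show ?thesis using y(2) v(1) by simp
  qed
qed

lemma vertical_path_ejectable:
  assumes i: "1 \<le> i" "i < r" and col: "cc i = cc (Suc i)" and nrow: "mm (Suc i) \<notin> row P i"
    and Fv: "F (Suc i, cc (Suc i)) = Some (mm (Suc i))"
  shows "ejectable F (Suc i) (mm (Suc i))"
proof (cases "mm (Suc i) + 1 \<in> row P (Suc i)")
  case True
  then obtain c2 where c2: "P (Suc i, c2) = Some (mm (Suc i) + 1)" unfolding row_def by auto
  have PS: "P (Suc i, cc (Suc i)) = Some (mm (Suc i))" using path_entry i by simp
  have lt2: "cc i < c2" using increasing_row_less_col[OF increasing PS c2] col by simp
  obtain w where w: "P (i, Suc (cc i)) = Some w"
    using increasing_closed[OF increasing, of "Suc i" c2 i "Suc (cc i)"] c2 lt2 i by fastforce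
  obtain w2 where w2: "P (Suc i, Suc (cc i)) = Some w2"
    using increasing_closed[OF increasing, of "Suc i" c2 "Suc i" "Suc (cc i)"] c2 lt2 by fastforce
  have "w < w2" using increasing_down[OF increasing w] w2 by simp
  moreover have "w2 \<le> mm (Suc i) + 1" using increasing_row_le[OF increasing w2 c2] lt2 by simp
  moreover have "w \<noteq> mm (Suc i)" using nrow w unfolding row_def by auto
  ultimately have "w < mm (Suc i)" by simp
  then have "Suc (cc i) \<le> cc i" using path_col_greatest[OF i w] by simp
  then show ?thesis by simp
next
  case False
  have "mm (Suc i) + 1 \<notin> row F (Suc i)"
  proof
    assume "mm (Suc i) + 1 \<in> row F (Suc i)"
    then obtain c3 where c3: "F (Suc i, c3) = Some (mm (Suc i) + 1)" unfolding row_def by auto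
    then have "c3 \<noteq> cc (Suc i)" using Fv by auto
    then show False using F_off_path[of "Suc i" c3] c3 False unfolding row_def by auto
  qed
  moreover have "mm (Suc i) \<in> row F (Suc i)" using Fv unfolding row_def by auto
  ultimately show ?thesis using ejectable.ej_stop by simp
qed

lemma F_col_strict_on_path:
  assumes Fu: "F (i, cc i) = Some u" and Fv: "F (i + 1, cc i) = Some v" and i: "1 \<le> i" "i \<le> r"
  shows "u < v"
proof -
  have lt: "i < r"
  proof (rule ccontr)
    assume "\<not> i < r"
    then have "F (Suc r, c) = Some v" using i Fv bcol_self by auto
    then show False using F_off_path[of "Suc r" c] below by simp
  qed
  obtain y where y: "F (i, cc i) = Some y" "y \<le> mm (Suc i)"
    "y = mm (Suc i) \<Longrightarrow> mm (Suc i) \<notin> row P i \<and> \<not> ejectable F (Suc i) (mm (Suc i))"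
    using F_on_path[OF i(1) lt] by metis
  have uy: "u = y" using y(1) Fu by simp
  show ?thesis
  proof (cases "cc i = cc (Suc i)")
    case False
    then have "P (Suc i, cc i) = Some v" using F_off_path[of "Suc i" "cc i"] Fv by simp
    moreover have "cc (Suc i) < cc i" using path_col_mono[OF i(1) lt] False by simp
    ultimately have "mm (Suc i) < v"
      using increasing_row_less[OF increasing path_entry[of "Suc i"]] lt by simp
    then show ?thesis using uy y(2) by simp
  next
    case True
    have "mm (Suc i) \<le> v" using bump_path_at[OF path, of "Suc i"] Fv True lt by simp
    moreover have "\<not> (u = mm (Suc i) \<and> v = mm (Suc i))"
      using vertical_path_ejectable[OF i(1) lt True] y(3) uy Fv True by auto
    ultimately show ?thesis using uy y(2) by linarith
  qed
qed

lemma F_col_strict: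
  assumes Fu: "F (i, c') = Some u" and Fv: "F (i + 1, c') = Some v"
  shows "u < v"
proof (cases "i \<le> r \<and> c' = cc i")
  case True
  then show ?thesis using F_col_strict_on_path F_index_pos[OF Fu] Fu Fv by blast
next
  case False
  then have Pu: "P (i, c') = Some u" using F_off_path Fu by metis
  show ?thesis
  proof (cases "Suc i \<le> r \<and> c' = cc (Suc i)")
    case True
    then have "mm (Suc i) \<le> v" and "u < mm (Suc i)"
      using bump_path_at[OF path, of "Suc i"] Fv increasing_down[OF increasing Pu] path_entry[of "Suc i"]
      by auto
    then show ?thesis by simp
  next
    case False
    then show ?thesis using F_off_path[of "Suc i" c'] Fv increasing_down[OF increasing Pu] by simp
  qed
qed

lemma increasing_F: "increasing_tableau F"
  unfolding increasing_tableau_def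
  using young_diagram_dom_F F_pos F_row_strict F_col_strict by (auto simp: ran_def)

end


section \<open>The steps of \<open>\<Psi>\<close>\<close>

lemma young_diagram_closed:
  "young_diagram D \<Longrightarrow> (r, c) \<in> D \<Longrightarrow> 1 \<le> r' \<Longrightarrow> r' \<le> r \<Longrightarrow> 1 \<le> c' \<Longrightarrow> c' \<le> c \<Longrightarrow> (r', c') \<in> D"
  unfolding young_diagram_def by blast

lemma young_diagram_pos: "young_diagram D \<Longrightarrow> (r, c) \<in> D \<Longrightarrow> 1 \<le> r \<and> 1 \<le> c"
  unfolding young_diagram_def by blast

lemma young_diagram_remove_corner:
  assumes D: "young_diagram D" and out: "(r, Suc c) \<notin> D" "(Suc r, c) \<notin> D"
  shows "young_diagram (D - {(r, c)})"
  unfolding young_diagram_def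
proof (intro conjI allI impI ballI)
  show "finite (D - {(r, c)})" using D unfolding young_diagram_def by blast
  show "case x of (r, c) \<Rightarrow> 1 \<le> r \<and> 1 \<le> c" if "x \<in> D - {(r, c)}" for x
    using young_diagram_pos[OF D] that by (cases x) blast
next
  fix i j i' j' assume h: "(i, j) \<in> D - {(r, c)}" "1 \<le> i'" "i' \<le> i" "1 \<le> j'" "j' \<le> j"
  then have "(i', j') \<in> D" using young_diagram_closed[OF D] by blast
  moreover have "(i', j') \<noteq> (r, c)"
  proof
    assume rc: "(i', j') = (r, c)"
    then consider "Suc r \<le> i" | "Suc c \<le> j" using h(1,3,5) by fastforce
    then show False
    proof cases
      case 1
      then have "(Suc r, c) \<in> D" using young_diagram_closed[OF D, of i j "Suc r" c] h rc by auto
      then show False using out by simp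
    next
      case 2
      then have "(r, Suc c) \<in> D" using young_diagram_closed[OF D, of i j r "Suc c"] h rc by auto
      then show False using out by simp
    qed
  qed
  ultimately show "(i', j') \<in> D - {(r, c)}" by simp
qed

lemma rsvtI:
  assumes "young_diagram (dom Q)" "\<And>S. S \<in> ran Q \<Longrightarrow> S \<noteq> {} \<and> finite S \<and> (\<forall>x\<in>S. x > 0)"
    and "\<And>i j S U. Q (i, j) = Some S \<Longrightarrow> Q (i, j + 1) = Some U \<Longrightarrow> Max U \<le> Min S"
    and "\<And>i j S U. Q (i, j) = Some S \<Longrightarrow> Q (i + 1, j) = Some U \<Longrightarrow> Max U < Min S"
  shows "rsvt Q"
proof -
  have "\<forall>S\<in>ran Q. S \<noteq> {} \<and> finite S \<and> (\<forall>x\<in>S. x > 0)" using assms(2) by blast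
  moreover have "\<forall>r c S U. Q (r, c) = Some S \<longrightarrow> Q (r, c + 1) = Some U \<longrightarrow> Min S \<ge> Max U"
    using assms(3) by blast
  moreover have "\<forall>r c S U. Q (r, c) = Some S \<longrightarrow> Q (r + 1, c) = Some U \<longrightarrow> Min S > Max U"
    using assms(4) by blast
  ultimately show ?thesis unfolding rsvt_def using assms(1) by simp
qed

context
  fixes Q :: stab
  assumes Q: "rsvt Q"
begin

lemma rsvt_entry: "Q x = Some S \<Longrightarrow> S \<noteq> {} \<and> finite S \<and> (\<forall>x\<in>S. x > 0)"
  using Q unfolding rsvt_def ran_def by blast

lemma rsvt_right: "Q (i, j) = Some S \<Longrightarrow> Q (i, j + 1) = Some U \<Longrightarrow> Max U \<le> Min S"
  using Q unfolding rsvt_def by simp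

lemma rsvt_down: "Q (i, j) = Some S \<Longrightarrow> Q (i + 1, j) = Some U \<Longrightarrow> Max U < Min S"
  using Q unfolding rsvt_def by simp

lemma rsvt_col_less:
  assumes S1: "Q (r1, c) = Some S1" and S2: "Q (r2, c) = Some S2" and lt: "r1 < r2"
  shows "Max S2 < Min S1"
proof -
  have "Suc r1 \<le> r2" using lt by simp
  then show ?thesis using S2
  proof (induction r2 arbitrary: S2 rule: dec_induct)
    case base
    then show ?case using rsvt_down[OF S1] by simp
  next
    case (step n)
    have y: "young_diagram (dom Q)" using Q unfolding rsvt_def by blast
    have "(Suc n, c) \<in> dom Q" using step(4) by blast
    moreover from this have "1 \<le> c" using young_diagram_pos[OF y] by blast
    ultimately have "(n, c) \<in> dom Q" using young_diagram_closed[OF y, of "Suc n" c n c] step(1) by simp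
    then obtain Sn where Sn: "Q (n, c) = Some Sn" by blast
    have "Max S2 < Min Sn" using rsvt_down[OF Sn] step(4) by simp
    moreover have "Min Sn \<le> Max Sn" using rsvt_entry[OF Sn] by simp
    ultimately show ?case using step.IH[OF Sn] by simp
  qed
qed

lemma rsvt_delete_corner:
  assumes out: "Q (r0, Suc c0) = None" "Q (Suc r0, c0) = None"
  shows "rsvt (Q((r0, c0) := None))" (is "rsvt ?Q'")
proof (rule rsvtI)
  have sub: "Q x = Some T" if "?Q' x = Some T" for x T
    using that by (cases "x = (r0, c0)") auto
  have "dom ?Q' = dom Q - {(r0, c0)}" by auto
  then show "young_diagram (dom ?Q')"
    using young_diagram_remove_corner[of "dom Q" r0 c0] Q out unfolding rsvt_def by auto
  show "S \<noteq> {} \<and> finite S \<and> (\<forall>x\<in>S. 0 < x)" if "S \<in> ran ?Q'" for S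
    using that sub rsvt_entry unfolding ran_def by blast
  show "Max U \<le> Min S" if "?Q' (i, j) = Some S" "?Q' (i, j + 1) = Some U" for i j S U
    using rsvt_right[OF sub[OF that(1)] sub[OF that(2)]] .
  show "Max U < Min S" if "?Q' (i, j) = Some S" "?Q' (i + 1, j) = Some U" for i j S U
    using rsvt_down[OF sub[OF that(1)] sub[OF that(2)]] .
qed

lemma rsvt_shrink_entry:
  assumes S0: "Q (r0, c0) = Some S0" and S: "S \<subseteq> S0" "S \<noteq> {}"
  shows "rsvt (Q((r0, c0) := Some S))" (is "rsvt ?Q'")
proof -
  have shrink: "\<exists>T0. Q x = Some T0 \<and> Min T0 \<le> Min T \<and> Max T \<le> Max T0 \<and>
      T \<noteq> {} \<and> finite T \<and> (\<forall>v\<in>T. 0 < v)" if "?Q' x = Some T" for x T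
  proof (cases "x = (r0, c0)")
    case True
    then have "T = S" using that by simp
    moreover have "finite S0" "\<forall>v\<in>S0. 0 < v" using rsvt_entry[OF S0] by auto
    ultimately show ?thesis
      using True S0 S by (auto intro: Min_antimono Max_mono finite_subset)
  next
    case False
    then show ?thesis using that rsvt_entry[of x T] by auto
  qed
  show ?thesis
  proof (rule rsvtI)
    have "dom ?Q' = dom Q" using S0 by auto
    then show "young_diagram (dom ?Q')" using Q unfolding rsvt_def by simp
    show "T \<noteq> {} \<and> finite T \<and> (\<forall>v\<in>T. 0 < v)" if "T \<in> ran ?Q'" for T
      using that shrink unfolding ran_def by blast
  next
    fix i j T U assume "?Q' (i, j) = Some T" "?Q' (i, j + 1) = Some U"
    then show "Max U \<le> Min T" using shrink rsvt_right by (meson order_trans)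
  next
    fix i j T U assume "?Q' (i, j) = Some T" "?Q' (i + 1, j) = Some U"
    then show "Max U < Min T" using shrink rsvt_down by (meson order_le_less_trans order_less_le_trans)
  qed
qed

lemma rsvt_column_unique:
  assumes S1: "Q (r1, c) = Some S1" "q \<in> S1" and S2: "Q (r2, c) = Some S2" "q \<in> S2"
  shows "r1 = r2"
proof -
  have "\<not> r < r'" if "Q (r, c) = Some S" "q \<in> S" "Q (r', c) = Some S'" "q \<in> S'" for r r' S S'
  proof
    assume "r < r'"
    then have "Max S' < Min S" using rsvt_col_less[OF that(1,3)] by simp
    moreover have "Min S \<le> q" "q \<le> Max S'" using that rsvt_entry[OF that(1)] rsvt_entry[OF that(3)] by auto
    ultimately show False by simp
  qed
  then show ?thesis using assms by (meson linorder_neqE_nat)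
qed

text \<open>An entry right of or below a cell containing the minimal entry \<open>q\<close> would be \<open>\<le> q\<close>, hence
  equal to \<open>q\<close>.\<close>

lemma rsvt_min_outer:
  assumes S0: "Q (r0, c0) = Some S0" "q \<in> S0" and min: "\<forall>x T. Q x = Some T \<longrightarrow> (\<forall>v\<in>T. q \<le> v)"
    and rightmost: "\<forall>r S. Q (r, Suc c0) = Some S \<longrightarrow> q \<notin> S"
  shows "Q (r0, Suc c0) = None" and "Q (Suc r0, c0) = None"
proof -
  have "Min S0 \<le> q" using S0 rsvt_entry[OF S0(1)] by simp
  show "Q (r0, Suc c0) = None"
  proof (rule ccontr)
    assume "Q (r0, Suc c0) \<noteq> None"
    then obtain S1 where S1: "Q (r0, Suc c0) = Some S1" by auto
    have "Max S1 \<in> S1" using rsvt_entry[OF S1] by simp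
    moreover have "Max S1 \<le> q" using rsvt_right[OF S0(1)] S1 \<open>Min S0 \<le> q\<close> by simp
    ultimately have "q \<in> S1" using min S1 by (metis antisym)
    then show False using rightmost S1 by blast
  qed
  show "Q (Suc r0, c0) = None"
  proof (rule ccontr)
    assume "Q (Suc r0, c0) \<noteq> None"
    then obtain S1 where S1: "Q (Suc r0, c0) = Some S1" by auto
    have "Max S1 \<in> S1" using rsvt_entry[OF S1] by simp
    moreover have "Max S1 < q" using rsvt_down[OF S0(1)] S1 \<open>Min S0 \<le> q\<close> by simp
    ultimately show False using min S1 by fastforce
  qed
qed

lemma psi_step_cell:
  assumes ne: "Q \<noteq> Map.empty"
  obtains r0 c0 S0 q where "Q (r0, c0) = Some S0" "q \<in> S0"
    and "Q (r0, Suc c0) = None" "Q (Suc r0, c0) = None"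
    and "psi_step P Q = (fst (rev_insert P (r0, c0) (S0 = {q})),
        if S0 = {q} then Q((r0, c0) := None) else Q((r0, c0) := Some (S0 - {q})),
        snd (rev_insert P (r0, c0) (S0 = {q})), q)"
proof -
  have finQ: "finite (dom Q)" using Q unfolding rsvt_def young_diagram_def by blast
  define U where "U = \<Union> (ran Q)"
  have "ran Q \<noteq> {}" using ne by (metis empty_iff ranI not_Some_eq ext)
  then have finU: "finite U" and Une: "U \<noteq> {}"
    unfolding U_def using finite_ran[OF finQ] rsvt_entry unfolding ran_def by auto
  define q where "q = Min U"
  have q_min: "q \<le> v" if "Q x = Some T" "v \<in> T" for x T v
  proof -
    have "v \<in> U" unfolding U_def using that by (auto intro: ranI)
    then show ?thesis unfolding q_def using finU by simp
  qed
  define G where "G = (\<lambda>c. \<exists>r S. Q (r, c) = Some S \<and> q \<in> S)"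
  define c0 where "c0 = (GREATEST c. G c)"
  obtain rx cx Sx where "Q (rx, cx) = Some Sx" "q \<in> Sx"
    using Min_in[OF finU Une] unfolding q_def U_def ran_def by auto
  then have Gx: "G cx" unfolding G_def by blast
  obtain B where "\<And>r c. Q (r, c) \<noteq> None \<Longrightarrow> c \<le> B" using finite_dom_column_bound[OF finQ] by blast
  then have Gb: "\<And>y. G y \<Longrightarrow> y \<le> B" unfolding G_def by fastforce
  have Gc0: "G c0" unfolding c0_def by (rule GreatestI_nat[of G cx B, OF Gx Gb])
  have Gmax: "\<And>y. G y \<Longrightarrow> y \<le> c0" unfolding c0_def by (rule Greatest_le_nat[of G _ B, OF _ Gb])
  obtain r0 S0 where S0: "Q (r0, c0) = Some S0" "q \<in> S0" using Gc0 unfolding G_def by blast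
  have r0: "r0 = (THE r. \<exists>S. Q (r, c0) = Some S \<and> q \<in> S)"
    by (rule sym, rule the_equality) (use S0 rsvt_column_unique in blast)+
  have "\<forall>r S. Q (r, Suc c0) = Some S \<longrightarrow> q \<notin> S" using Gmax unfolding G_def by fastforce
  moreover have "\<forall>x T. Q x = Some T \<longrightarrow> (\<forall>v\<in>T. q \<le> v)" using q_min by blast
  ultimately have outer: "Q (r0, Suc c0) = None" "Q (Suc r0, c0) = None"
    using rsvt_min_outer[OF S0] by blast+
  have "psi_step P Q = (fst (rev_insert P (r0, c0) (S0 = {q})),
        if S0 = {q} then Q((r0, c0) := None) else Q((r0, c0) := Some (S0 - {q})),
        snd (rev_insert P (r0, c0) (S0 = {q})), q)"
    unfolding psi_step_def Let_def q_def[unfolded U_def, symmetric] G_def[symmetric] c0_def[symmetric]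
      r0[symmetric] S0(1) by simp
  then show ?thesis using that S0 outer by blast
qed

end

lemma psi_step_calT:
  assumes T: "(P, Q) \<in> calT" and ne: "Q \<noteq> Map.empty" and step: "psi_step P Q = (P', Q', m, q)"
  shows "(P', Q') \<in> calT" and "\<exists>r al mm cc. bump_path P P' m r al mm cc"
proof -
  have P: "increasing_tableau P" and Q: "rsvt Q" and dom_eq: "dom P = dom Q"
    using T unfolding calT_def by auto
  have PQ: "P x = None \<longleftrightarrow> Q x = None" for x using dom_eq by (metis domIff)
  obtain r0 c0 S0 q0 where S0: "Q (r0, c0) = Some S0" "q0 \<in> S0"
    and out: "Q (r0, Suc c0) = None" "Q (Suc r0, c0) = None"
    and eq: "psi_step P Q = (fst (rev_insert P (r0, c0) (S0 = {q0})),
        if S0 = {q0} then Q((r0, c0) := None) else Q((r0, c0) := Some (S0 - {q0})),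
        snd (rev_insert P (r0, c0) (S0 = {q0})), q0)"
    using psi_step_cell[OF Q ne] by blast
  define al where "al = (S0 = {q0})"
  have "(P', Q', m, q) = (fst (rev_insert P (r0, c0) al),
      if al then Q((r0, c0) := None) else Q((r0, c0) := Some (S0 - {q0})), snd (rev_insert P (r0, c0) al), q0)"
    using eq unfolding step al_def .
  then have "P' = fst (rev_insert P (r0, c0) al)" "m = snd (rev_insert P (r0, c0) al)"
    and Q': "Q' = (if al then Q((r0, c0) := None) else Q((r0, c0) := Some (S0 - {q0})))"
    unfolding prod.inject by blast+
  then have ins: "rev_insert P (r0, c0) al = (P', m)" by simp
  have P_cell: "P (r0, c0) \<noteq> None" "P (r0, Suc c0) = None" "P (Suc r0, c0) = None"
    using S0 out PQ by auto
  interpret outer_cell P r0 c0 using P P_cell by unfold_locales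
  have path: "bump_path P P' m r0 al (bval P r0 c0) (bcol P r0 c0)"
    using rev_insert_bump_path[OF ins] .
  interpret reverse_insertion P r0 c0 P' m al using path P_cell by unfold_locales
  have "P' x = None \<longleftrightarrow> Q' x = None" for x
    using dom_F[of x] PQ[of x] S0(1) unfolding Q' by auto
  then have "dom P' = dom Q'" by (auto simp: dom_def)
  moreover have "rsvt Q'"
    using rsvt_delete_corner[OF Q out] rsvt_shrink_entry[OF Q S0(1), of "S0 - {q0}"] S0(2) Q'
    unfolding al_def by auto
  ultimately show "(P', Q') \<in> calT" using increasing_F unfolding calT_def by simp
  show "\<exists>r al mm cc. bump_path P P' m r al mm cc" using path by blast
qed

lemma Psi_graph_insertion_tableau: "Psi_graph P Q A I \<Longrightarrow> (P, Q) \<in> calT \<Longrightarrow> insertion_tableau P A"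
proof (induction rule: Psi_graph.induct)
  case psi_empty
  show ?case by (rule insertion_tableau_Nil)
next
  case (psi_step Q P P' Q' m q a' i')
  obtain r al mm cc where "bump_path P P' m r al mm cc"
    using psi_step_calT(2)[OF psi_step.prems psi_step.hyps(1,2)] by blast
  moreover have "insertion_tableau P' a'"
    using psi_step.IH psi_step_calT(1)[OF psi_step.prems psi_step.hyps(1,2)] by blast
  ultimately show ?case by (rule insertion_tableau_Cons)
qed

theorem lemma2p13:
  fixes A I a i :: "nat list" and N :: int and P p :: tab and Q q :: stab
  assumes "(A, I) \<in> calC"
    and "N \<notin> int ` set A"
    and "a = filter (\<lambda>x. int x \<le> N) A"
    and "(a, i) \<in> calC"
    and "(P, Q) \<in> calT" and "Psi_graph P Q A I"
    and "(p, q) \<in> calT" and "Psi_graph p q a i"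
  shows "restrict_le N P = p"
proof -
  have "insertion_tableau (restrict_le N P) a"
    using insertion_tableau_restrict_le[OF Psi_graph_insertion_tableau[OF assms(6,5)] assms(2)] assms(3)
    by simp
  moreover have "insertion_tableau p a" using Psi_graph_insertion_tableau[OF assms(8,7)] .
  ultimately show ?thesis using insertion_tableau_unique by blast
qed

end
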